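(* Let $\alpha\in(0,1)$. Suppose $\tau_1=\cdots=\tau_K=\tau_0$ where $\mathbb P(\tau_0=m)=\theta(1-\theta)^m$, $m=0,1,\dots$, $\theta\in(0,1)$, and conditionally on $\tau_0$ the observations $X_{k,t}$ are independent with density $p$ if $t\le\tau_0$ and $q$ if $t>\tau_0$; assume Assumption A2. Let $W_t=\mathbb P(\tau_0<t\mid X_{k,s},1\le k\le K,1\le s\le t)$ and $T=\min\{t:W_t>\alpha\}$. Then the proposed procedure satisfies $\mathbb T^*_K=(T,\dots,T)$. Moreover, with all $K$ defined on one probability space (an infinite family of streams sharing $\tau_0$), for each $t\ge1$: (1) $\lim_{K\to\infty}(T-\tau_0)=1$ a.s.; (2) $\lim_{K\to\infty}\mathrm{LFNR}_{t+1}(\mathbb T^*_K)=0$ a.s.; (3) $\lim_{K\to\infty}K^{-1}|S^*_{K,t+1}|=\mathbf 1(\tau_0\ge t)$ a.s.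
   Context: Assumption A2: for $Z_1\sim p$ and $Z_2\sim q$, $\mathbb E\log\frac{p(Z_1)}{q(Z_1)}>0$, $\mathbb E\log\frac{q(Z_2)}{p(Z_2)}>0$, $\mathbb E\big(\log\frac{p(Z_1)}{q(Z_1)}\big)^2<\infty$ and $\mathbb E\big(\log\frac{q(Z_2)}{p(Z_2)}\big)^2<\infty$. A compound sequential detection procedure for $K$ streams consists of index sets $S_1=\{1,\dots,K\}\supseteq S_2\supseteq\cdots$ and a filtration defined inductively by $\mathcal F_1=\sigma(X_{k,1}:1\le k\le K)$ and $\mathcal F_t=\sigma(\mathcal F_{t-1},S_t,X_{k,t}:k\in S_t)$, where $S_t$ is $\mathcal F_{t-1}$-measurable; equivalently $\mathbb T=(T_1,\dots,T_K)$ with $T_k=\sup\{t:k\in S_t\}$. For $t\ge1$, $\mathrm{FNP}_{t+1}=\sum_{k\in S_{t+1}}\mathbf 1(\tau_k<t)/(|S_{t+1}|\vee1)$ and $\mathrm{LFNR}_{t+1}=\mathbb E(\mathrm{FNP}_{t+1}\mid\mathcal F_t)$. Posteriors: $W_{k,t}=\mathbb P(\tau_k<t\mid\mathcal F_t)$. One-step update rule: given $\alpha$, $S_t$ and $(W_{k,t})_{k\in S_t}$, write $S_t=\{k_1,\dots,k_m\}$ ordered so that $W_{k_1,t}\le\cdots\le W_{k_m,t}$, ties broken by increasing index; set $R_0=0$, $R_n=\frac1n\sum_{i=1}^nW_{k_i,t}$; let $n$ be the largest element of $\{0,\dots,m\}$ with $R_n\le\alpha$; output $S_{t+1}=\{k_1,\dots,k_n\}$.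 The proposed procedure $\mathbb T^*_K$ (with active sets $S^*_{K,t}$): $S_1=\{1,\dots,K\}$ and for each $t\ge1$, $S_{t+1}$ is the output of the one-step rule applied to $S_t$ and its current posteriors. *)

theory Defs
  imports "HOL-Probability.Probability"
begin

text \<open>One-step update rule: sort the active set by posterior with a stable sort applied to the index-sorted list (so ties are broken by increasing index), let R n be the
  mean of the n smallest posteriors (R 0 = 0 since x / 0 = 0), keep the largest
  prefix with R n below alpha.\<close>
definition onestep :: "real \<Rightarrow> nat set \<Rightarrow> (nat \<Rightarrow> real) \<Rightarrow> nat set" where
  "onestep \<alpha> S W =
     (let ks = sort_key W (sorted_list_of_set S);
          R = (\<lambda>n. (\<Sum>i<n. W (ks ! i)) / real n);
          n = (GREATEST n. n \<le> length ks \<and> R n \<le> \<alpha>)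
      in set (take n ks))"

definition obs_gens :: "'a measure \<Rightarrow> 'b measure \<Rightarrow> (nat \<Rightarrow> nat \<Rightarrow> 'a \<Rightarrow> 'b)
    \<Rightarrow> ('a \<Rightarrow> nat set) \<Rightarrow> nat \<Rightarrow> 'a set set" where
  "obs_gens M N X S t =
     {{\<omega> \<in> space M. S \<omega> = s} | s. True} \<union>
     {{\<omega> \<in> space M. k \<in> S \<omega> \<and> X k t \<omega> \<in> B} | k B. B \<in> sets N}"

text \<open>proc_SF M N X tau alpha K n = (S_{n+1}, F_{n+1}) of the proposed procedure for
  K streams; tau k is the change point of stream k.\<close>
fun proc_SF :: "'a measure \<Rightarrow> 'b measure \<Rightarrow> (nat \<Rightarrow> nat \<Rightarrow> 'a \<Rightarrow> 'b) \<Rightarrow> (nat \<Rightarrow> 'a \<Rightarrow> nat)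
    \<Rightarrow> real \<Rightarrow> nat \<Rightarrow> nat \<Rightarrow> ('a \<Rightarrow> nat set) \<times> 'a measure" where
  "proc_SF M N X \<tau> \<alpha> K 0 =
     ((\<lambda>\<omega>. {1..K}), sigma (space M) (obs_gens M N X (\<lambda>\<omega>. {1..K}) 1))"
| "proc_SF M N X \<tau> \<alpha> K (Suc n) =
     (let SF = proc_SF M N X \<tau> \<alpha> K n; S = fst SF; F = snd SF;
          S' = (\<lambda>\<omega>. onestep \<alpha> (S \<omega>)
                  (\<lambda>k. real_cond_exp M F (indicator {x \<in> space M. \<tau> k x < Suc n}) \<omega>))
      in (S', sigma (space M) (sets F \<union> obs_gens M N X S' (Suc (Suc n)))))"

definition proc_S :: "'a measure \<Rightarrow> 'b measure \<Rightarrow> (nat \<Rightarrow> nat \<Rightarrow> 'a \<Rightarrow> 'b) \<Rightarrow> (nat \<Rightarrow> 'a \<Rightarrow> nat)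
    \<Rightarrow> real \<Rightarrow> nat \<Rightarrow> nat \<Rightarrow> 'a \<Rightarrow> nat set" where
  "proc_S M N X \<tau> \<alpha> K t = fst (proc_SF M N X \<tau> \<alpha> K (t - 1))"

definition proc_F :: "'a measure \<Rightarrow> 'b measure \<Rightarrow> (nat \<Rightarrow> nat \<Rightarrow> 'a \<Rightarrow> 'b) \<Rightarrow> (nat \<Rightarrow> 'a \<Rightarrow> nat)
    \<Rightarrow> real \<Rightarrow> nat \<Rightarrow> nat \<Rightarrow> 'a measure" where
  "proc_F M N X \<tau> \<alpha> K t = snd (proc_SF M N X \<tau> \<alpha> K (t - 1))"

definition proc_T :: "'a measure \<Rightarrow> 'b measure \<Rightarrow> (nat \<Rightarrow> nat \<Rightarrow> 'a \<Rightarrow> 'b) \<Rightarrow> (nat \<Rightarrow> 'a \<Rightarrow> nat)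
    \<Rightarrow> real \<Rightarrow> nat \<Rightarrow> nat \<Rightarrow> 'a \<Rightarrow> enat" where
  "proc_T M N X \<tau> \<alpha> K k \<omega> = (SUP t \<in> {t. 1 \<le> t \<and> k \<in> proc_S M N X \<tau> \<alpha> K t \<omega>}. enat t)"

definition proc_FNP_next :: "'a measure \<Rightarrow> 'b measure \<Rightarrow> (nat \<Rightarrow> nat \<Rightarrow> 'a \<Rightarrow> 'b) \<Rightarrow> (nat \<Rightarrow> 'a \<Rightarrow> nat)
    \<Rightarrow> real \<Rightarrow> nat \<Rightarrow> nat \<Rightarrow> 'a \<Rightarrow> real" where
  "proc_FNP_next M N X \<tau> \<alpha> K t \<omega> =
     (\<Sum>k \<in> proc_S M N X \<tau> \<alpha> K (t + 1) \<omega>. if \<tau> k \<omega> < t then 1 else 0)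
       / real (max (card (proc_S M N X \<tau> \<alpha> K (t + 1) \<omega>)) 1)"

definition proc_LFNR_next :: "'a measure \<Rightarrow> 'b measure \<Rightarrow> (nat \<Rightarrow> nat \<Rightarrow> 'a \<Rightarrow> 'b) \<Rightarrow> (nat \<Rightarrow> 'a \<Rightarrow> nat)
    \<Rightarrow> real \<Rightarrow> nat \<Rightarrow> nat \<Rightarrow> 'a \<Rightarrow> real" where
  "proc_LFNR_next M N X \<tau> \<alpha> K t =
     real_cond_exp M (proc_F M N X \<tau> \<alpha> K t) (proc_FNP_next M N X \<tau> \<alpha> K t)"

definition obs_full :: "'a measure \<Rightarrow> 'b measure \<Rightarrow> (nat \<Rightarrow> nat \<Rightarrow> 'a \<Rightarrow> 'b) \<Rightarrow> nat \<Rightarrow> nat \<Rightarrow> 'a measure" where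
  "obs_full M N X K t = sigma (space M)
     {X k s -` B \<inter> space M | k s B. 1 \<le> k \<and> k \<le> K \<and> 1 \<le> s \<and> s \<le> t \<and> B \<in> sets N}"

definition post_W :: "'a measure \<Rightarrow> 'b measure \<Rightarrow> (nat \<Rightarrow> nat \<Rightarrow> 'a \<Rightarrow> 'b) \<Rightarrow> ('a \<Rightarrow> nat)
    \<Rightarrow> nat \<Rightarrow> nat \<Rightarrow> 'a \<Rightarrow> real" where
  "post_W M N X tau0 K t = real_cond_exp M (obs_full M N X K t) (indicator {\<omega> \<in> space M. tau0 \<omega> < t})"

definition stop_T :: "'a measure \<Rightarrow> 'b measure \<Rightarrow> (nat \<Rightarrow> nat \<Rightarrow> 'a \<Rightarrow> 'b) \<Rightarrow> ('a \<Rightarrow> nat)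
    \<Rightarrow> real \<Rightarrow> nat \<Rightarrow> 'a \<Rightarrow> enat" where
  "stop_T M N X tau0 \<alpha> K \<omega> =
     (if \<exists>t \<ge> 1. post_W M N X tau0 K t \<omega> > \<alpha>
      then enat (LEAST t. 1 \<le> t \<and> post_W M N X tau0 K t \<omega> > \<alpha>) else \<infinity>)"

end

theory Submission
  imports Defs
begin

text \<open>Because all streams share the change point, their posteriors coincide, so the one-step rule
  keeps either every stream or none. While every stream is active the information of the procedure
  is the full observation \<sigma>-algebra, hence its posterior is W_t and all streams stop at T.

  Assumption A2 yields a set B with different probabilities under p and q. The fraction of the K
  streams with X_{k,t} \<in> B then reveals whether \<tau>0 < t, and by Hoeffding's inequality
  (conditionally on \<tau>0) its error probability decays exponentially in K. Since W_t is the
  mean-square optimal predictor of the event \<tau>0 < t, the squared errors of W_t are summable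
  in K, so W_t \<rightarrow> 1(\<tau>0 < t) almost surely. The three limits then hold pointwise: for
  large K, T = \<tau>0 + 1 and all streams are active at t + 1 iff t \<le> \<tau>0.\<close>

section \<open>Conditional expectations of indicators\<close>

lemma prob_space_sigma_finite_subalgebra:
  "prob_space M \<Longrightarrow> subalgebra M F \<Longrightarrow> sigma_finite_subalgebra M F"
  by (rule finite_measure_subalgebra_is_sigma_finite)
     (simp add: finite_measure_subalgebra_def finite_measure_subalgebra_axioms_def prob_space_def)

lemma borel_measurable_indicator_times_trace:
  assumes g: "g \<in> borel_measurable G" and A: "A \<in> sets F"
    and trace: "\<forall>B\<in>sets G. B \<inter> A \<in> sets F" and "space F = space G"
  shows "(\<lambda>x. indicator A x * g x :: real) \<in> borel_measurable F"
proof (rule measurableI)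
  fix U :: "real set" assume U: "U \<in> sets borel"
  have "A \<subseteq> space F" using A sets.sets_into_space by blast
  then have "(\<lambda>x. indicator A x * g x) -` U \<inter> space F =
      ((g -` U \<inter> space G) \<inter> A) \<union> (if 0 \<in> U then space F - A else {})"
    using assms(4) by (auto simp: indicator_def of_bool_def split: if_splits)
  moreover have "(g -` U \<inter> space G) \<inter> A \<in> sets F"
    using trace measurable_sets[OF g U] by blast
  ultimately show "(\<lambda>x. indicator A x * g x) -` U \<inter> space F \<in> sets F"
    using A by auto
qed simp

lemma real_cond_exp_eq_on_trace:
  assumes P: "prob_space M" and MG: "subalgebra M G" and GF: "subalgebra G F"
    and A: "A \<in> sets F" and trace: "\<forall>B\<in>sets G. B \<inter> A \<in> sets F"
    and f: "integrable M f"
  shows "AE x in M. x \<in> A \<longrightarrow> real_cond_exp M F f x = real_cond_exp M G f x"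
proof -
  have MF: "subalgebra M F" using MG GF by (auto simp: subalgebra_def)
  interpret G: sigma_finite_subalgebra M G using prob_space_sigma_finite_subalgebra[OF P MG] .
  interpret F: sigma_finite_subalgebra M F using prob_space_sigma_finite_subalgebra[OF P MF] .
  have [measurable]: "f \<in> borel_measurable M" using f by auto
  have AM: "A \<in> sets M" and AG: "A \<in> sets G" using A MF GF by (auto simp: subalgebra_def)
  \<comment> \<open>h is F-measurable by the trace assumption, hence equal to E(1_A f | F).\<close>
  define h where "h = (\<lambda>x. indicator A x * real_cond_exp M G f x)"
  have hF: "h \<in> borel_measurable F" unfolding h_def
    by (rule borel_measurable_indicator_times_trace[OF _ A trace])
       (use GF in \<open>auto simp: subalgebra_def\<close>)
  have hi: "integrable M h" unfolding h_def
    using integrable_real_mult_indicator[OF AM G.real_cond_exp_int(1)[OF f]]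
    by (simp add: mult.commute)
  have Af: "integrable M (\<lambda>x. indicator A x * f x)"
    using integrable_real_mult_indicator[OF AM f] by (simp add: mult.commute)
  have "AE x in M. real_cond_exp M F (\<lambda>x. indicator A x * f x) x = indicator A x * real_cond_exp M F f x"
    by (rule F.real_cond_exp_mult) (use A Af in auto)
  moreover have "AE x in M. real_cond_exp M G (\<lambda>x. indicator A x * f x) x = h x"
    unfolding h_def by (rule G.real_cond_exp_mult) (use AG Af in auto)
  then have "AE x in M. real_cond_exp M F (real_cond_exp M G (\<lambda>x. indicator A x * f x)) x
               = real_cond_exp M F h x"
    by (rule F.real_cond_exp_cong) (use hF MF measurable_from_subalg in auto)
  moreover have "AE x in M. real_cond_exp M F (real_cond_exp M G (\<lambda>x. indicator A x * f x)) x
               = real_cond_exp M F (\<lambda>x. indicator A x * f x) x"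
    by (rule F.real_cond_exp_nested_subalg[OF MG GF Af])
  moreover have "AE x in M. real_cond_exp M F h x = h x"
    by (rule F.real_cond_exp_F_meas[OF hi hF])
  ultimately show ?thesis
    by eventually_elim (auto simp: h_def indicator_def)
qed

lemma real_cond_exp_indicator_bounds:
  assumes P: "prob_space M" and MG: "subalgebra M G" and E: "E \<in> sets M"
  shows "AE x in M. 0 \<le> real_cond_exp M G (indicator E) x \<and> real_cond_exp M G (indicator E) x \<le> 1"
proof -
  interpret G: sigma_finite_subalgebra M G using prob_space_sigma_finite_subalgebra[OF P MG] .
  interpret prob_space M by fact
  have fi: "integrable M (indicator E :: 'a \<Rightarrow> real)"
    using E by (intro integrable_const_bound[of _ 1]) auto
  have "AE x in M. real_cond_exp M G (indicator E) x \<ge> 0"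
    by (rule G.real_cond_exp_ge_c[OF fi]) simp
  moreover have "AE x in M. real_cond_exp M G (indicator E) x \<le> 1"
    by (rule G.real_cond_exp_le_c[OF fi]) (simp add: indicator_def)
  ultimately show ?thesis by eventually_elim simp
qed

lemma integrable_indicator_minus_real_cond_exp_sq:
  assumes P: "prob_space M" and MG: "subalgebra M G" and E: "E \<in> sets M"
  shows "integrable M (\<lambda>x. (indicator E x - real_cond_exp M G (indicator E) x)\<^sup>2)"
proof -
  interpret prob_space M by fact
  show ?thesis
  proof (rule integrable_const_bound[of _ 1])
    show "AE x in M. norm ((indicator E x - real_cond_exp M G (indicator E) x)\<^sup>2) \<le> 1"
      using real_cond_exp_indicator_bounds[OF assms]
      by eventually_elim (auto simp: indicator_def abs_square_le_1)
  qed (use E in simp)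
qed

lemma real_cond_exp_indicator_L2_le:
  assumes P: "prob_space M" and MG: "subalgebra M G" and E: "E \<in> sets M"
    and Z: "Z \<in> borel_measurable G" and Z01: "\<And>x. 0 \<le> Z x" "\<And>x. Z x \<le> 1"
  shows "(\<integral>x. (indicator E x - real_cond_exp M G (indicator E) x)\<^sup>2 \<partial>M)
           \<le> (\<integral>x. (indicator E x - Z x)\<^sup>2 \<partial>M)"
proof -
  interpret G: sigma_finite_subalgebra M G using prob_space_sigma_finite_subalgebra[OF P MG] .
  interpret prob_space M by fact
  define f :: "'a \<Rightarrow> real" where "f = indicator E"
  define W where "W = real_cond_exp M G f"
  define d where "d = (\<lambda>x. W x - Z x)"
  have [measurable]: "f \<in> borel_measurable M" using E unfolding f_def by simp
  have [measurable]: "Z \<in> borel_measurable M" using Z MG measurable_from_subalg by blast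
  have [measurable]: "W \<in> borel_measurable M" unfolding W_def by simp
  have dG: "d \<in> borel_measurable G" unfolding d_def W_def using Z by simp
  have bounded: "AE x in M. \<bar>W x\<bar> \<le> 1 \<and> \<bar>d x\<bar> \<le> 1 \<and> \<bar>f x\<bar> \<le> 1"
    using real_cond_exp_indicator_bounds[OF P MG E]
  proof eventually_elim
    case (elim x)
    then show ?case using Z01[of x] by (auto simp: W_def d_def f_def indicator_def abs_le_iff)
  qed
  have integrable_product: "integrable M (\<lambda>x. a x * b x)"
    if "a \<in> borel_measurable M" "b \<in> borel_measurable M"
       "AE x in M. \<bar>a x\<bar> \<le> 1 \<and> \<bar>b x\<bar> \<le> 1" for a b :: "'a \<Rightarrow> real"
  proof (rule integrable_const_bound[of _ 1])
    show "AE x in M. norm (a x * b x) \<le> 1"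
      using that(3) by eventually_elim (simp add: abs_mult mult_le_one)
  qed (use that in simp)
  have i_df: "integrable M (\<lambda>x. d x * f x)" and i_dW: "integrable M (\<lambda>x. d x * W x)"
    and i_dd: "integrable M (\<lambda>x. d x * d x)"
    using bounded by (auto intro!: integrable_product simp: d_def)
  have i_fW: "integrable M (\<lambda>x. (f x - W x) * (f x - W x))"
  proof (rule integrable_product)
    show "AE x in M. \<bar>f x - W x\<bar> \<le> 1 \<and> \<bar>f x - W x\<bar> \<le> 1"
      using real_cond_exp_indicator_bounds[OF P MG E]
      by eventually_elim (auto simp: W_def f_def indicator_def)
  qed simp_all
  have orthogonal: "(\<integral>x. d x * W x \<partial>M) = (\<integral>x. d x * f x \<partial>M)"
    unfolding W_def by (rule G.real_cond_exp_intg(2)[OF i_df dG]) simp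
  have "(\<integral>x. (f x - Z x)\<^sup>2 \<partial>M)
      = (\<integral>x. (f x - W x) * (f x - W x) + (d x * d x + 2 * (d x * f x - d x * W x)) \<partial>M)"
    by (rule Bochner_Integration.integral_cong) (auto simp: d_def power2_eq_square algebra_simps)
  also have "\<dots> = (\<integral>x. (f x - W x)\<^sup>2 \<partial>M) + (\<integral>x. d x * d x \<partial>M)
                   + 2 * ((\<integral>x. d x * f x \<partial>M) - (\<integral>x. d x * W x \<partial>M))"
    using i_fW i_dd i_df i_dW by (simp add: power2_eq_square)
  also have "\<dots> \<ge> (\<integral>x. (f x - W x)\<^sup>2 \<partial>M)"
    unfolding orthogonal by simp
  finally show ?thesis unfolding f_def W_def .
qed

lemma AE_LIMSEQ_of_summable_L2_error:
  fixes f :: "'a \<Rightarrow> real" and W :: "nat \<Rightarrow> 'a \<Rightarrow> real"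
  assumes "f \<in> borel_measurable M" "\<And>K. W K \<in> borel_measurable M"
    and integrable: "\<And>K. integrable M (\<lambda>x. (f x - W K x)\<^sup>2)"
    and error: "\<And>K. (\<integral>x. (f x - W K x)\<^sup>2 \<partial>M) \<le> c K" and "summable c"
  shows "AE x in M. (\<lambda>K. W K x) \<longlonglongrightarrow> f x"
proof -
  have c_nonneg: "0 \<le> c K" for K
  proof -
    have "0 \<le> (\<integral>x. (f x - W K x)\<^sup>2 \<partial>M)" by simp
    then show ?thesis using error[of K] by linarith
  qed
  have [measurable]: "f \<in> borel_measurable M" "W K \<in> borel_measurable M" for K
    using assms(1,2) by auto
  have "(\<integral>\<^sup>+ x. (\<Sum>K. ennreal ((f x - W K x)\<^sup>2)) \<partial>M) = (\<Sum>K. \<integral>\<^sup>+ x. ennreal ((f x - W K x)\<^sup>2) \<partial>M)"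
    by (rule nn_integral_suminf) simp
  also have "\<dots> = (\<Sum>K. ennreal (\<integral>x. (f x - W K x)\<^sup>2 \<partial>M))"
    by (intro suminf_cong nn_integral_eq_integral integrable) auto
  also have "\<dots> \<le> (\<Sum>K. ennreal (c K))"
    by (intro suminf_le) (auto intro: error ennreal_leI)
  also have "\<dots> < \<infinity>"
    using ennreal_suminf_neq_top[OF \<open>summable c\<close> c_nonneg] by (simp add: top.not_eq_extremum)
  finally have "AE x in M. (\<Sum>K. ennreal ((f x - W K x)\<^sup>2)) \<noteq> \<infinity>"
    by (intro nn_integral_PInf_AE) auto
  then show ?thesis
  proof eventually_elim
    case (elim x)
    have "summable (\<lambda>K. (f x - W K x)\<^sup>2)"
      by (rule summable_suminf_not_top) (use elim in auto)
    then have "(\<lambda>K. (f x - W K x)\<^sup>2) \<longlonglongrightarrow> 0" by (rule summable_LIMSEQ_zero)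
    then have "(\<lambda>K. \<bar>f x - W K x\<bar>) \<longlonglongrightarrow> 0"
      using tendsto_real_sqrt[of "\<lambda>K. (f x - W K x)\<^sup>2" 0] by simp
    then have "(\<lambda>K. f x - (f x - W K x)) \<longlonglongrightarrow> f x - 0"
      by (intro tendsto_intros) (simp add: tendsto_rabs_zero_iff)
    then show ?case by simp
  qed
qed

section \<open>Densities\<close>

lemma emeasure_density_le_1:
  assumes "p \<in> borel_measurable N" "(\<integral>\<^sup>+ z. ennreal (p z) \<partial>N) = 1" "B \<in> sets N"
  shows "emeasure (density N (\<lambda>z. ennreal (p z))) B \<le> 1"
proof -
  have "emeasure (density N (\<lambda>z. ennreal (p z))) B = (\<integral>\<^sup>+ z. ennreal (p z) * indicator B z \<partial>N)"
    using assms by (simp add: emeasure_density)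
  also have "\<dots> \<le> (\<integral>\<^sup>+ z. ennreal (p z) \<partial>N)"
    by (intro nn_integral_mono) (auto simp: indicator_def)
  finally show ?thesis using assms(2) by simp
qed

text \<open>If p N = q N, the two Kullback-Leibler divergences would be opposite numbers.\<close>

lemma density_separating_set:
  fixes p q :: "'b \<Rightarrow> real"
  assumes pm: "p \<in> borel_measurable N" and qm: "q \<in> borel_measurable N"
    and p1: "(\<integral>\<^sup>+ z. ennreal (p z) \<partial>N) = 1" and q1: "(\<integral>\<^sup>+ z. ennreal (q z) \<partial>N) = 1"
    and p_pos: "AE z in density N (\<lambda>z. ennreal (q z)). 0 < p z"
    and KL_pq: "integral\<^sup>L (density N (\<lambda>z. ennreal (p z))) (\<lambda>z. ln (p z / q z)) > 0"
    and KL_qp: "integral\<^sup>L (density N (\<lambda>z. ennreal (q z))) (\<lambda>z. ln (q z / p z)) > 0"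
  obtains B where "B \<in> sets N"
    "measure (density N (\<lambda>z. ennreal (p z))) B \<noteq> measure (density N (\<lambda>z. ennreal (q z))) B"
proof (rule ccontr)
  assume "\<not> thesis"
  with that have same: "measure (density N (\<lambda>z. ennreal (p z))) B
      = measure (density N (\<lambda>z. ennreal (q z))) B" if "B \<in> sets N" for B
    using that by blast
  have "density N (\<lambda>z. ennreal (p z)) = density N (\<lambda>z. ennreal (q z))"
  proof (rule measure_eqI)
    fix B assume "B \<in> sets (density N (\<lambda>z. ennreal (p z)))"
    then have B: "B \<in> sets N" by simp
    have "emeasure (density N (\<lambda>z. ennreal (p z))) B = measure (density N (\<lambda>z. ennreal (p z))) B"
      using emeasure_density_le_1[OF pm p1 B] by (intro emeasure_eq_ennreal_measure) (auto simp: top_unique)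
    also have "\<dots> = emeasure (density N (\<lambda>z. ennreal (q z))) B"
      using same[OF B] emeasure_density_le_1[OF qm q1 B]
      by (metis emeasure_eq_ennreal_measure ennreal_one_less_top linorder_not_less)
    finally show "emeasure (density N (\<lambda>z. ennreal (p z))) B = emeasure (density N (\<lambda>z. ennreal (q z))) B" .
  qed simp
  moreover have "AE z in density N (\<lambda>z. ennreal (q z)). ln (p z / q z) = - ln (q z / p z)"
  proof -
    have "AE z in density N (\<lambda>z. ennreal (q z)). 0 < q z"
      using qm by (subst AE_density) auto
    with p_pos show ?thesis by eventually_elim (simp add: ln_div)
  qed
  then have "integral\<^sup>L (density N (\<lambda>z. ennreal (q z))) (\<lambda>z. ln (p z / q z))
      = integral\<^sup>L (density N (\<lambda>z. ennreal (q z))) (\<lambda>z. - ln (q z / p z))"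
    by (rule integral_cong_AE[rotated 2]) (use pm qm in auto)
  ultimately show False using KL_pq KL_qp by simp
qed

section \<open>The procedure when all streams share the change point\<close>

lemma onestep_constant:
  assumes "finite S" "0 \<le> \<alpha>"
  shows "onestep \<alpha> S (\<lambda>k. w) = (if w \<le> \<alpha> then S else {})"
proof -
  define ks where "ks = sort_key (\<lambda>k. w) (sorted_list_of_set S)"
  have mean: "(\<Sum>i<n. (\<lambda>k. w) (ks ! i)) / real n = (if n = 0 then 0 else w)" for n
    by simp
  have set_ks: "set ks = S" using assms by (simp add: ks_def)
  show ?thesis
  proof (cases "w \<le> \<alpha>")
    case True
    have "(GREATEST n. n \<le> length ks \<and> (\<Sum>i<n. (\<lambda>k. w) (ks ! i)) / real n \<le> \<alpha>) = length ks"
      by (rule Greatest_equality) (use True assms in \<open>auto simp: mean\<close>)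
    then show ?thesis using True set_ks unfolding onestep_def Let_def ks_def[symmetric] by simp
  next
    case False
    have "(GREATEST n. n \<le> length ks \<and> (\<Sum>i<n. (\<lambda>k. w) (ks ! i)) / real n \<le> \<alpha>) = 0"
      by (rule Greatest_equality) (use False assms in \<open>auto simp: mean split: if_splits\<close>)
    then show ?thesis using False set_ks unfolding onestep_def Let_def ks_def[symmetric] by simp
  qed
qed

lemma sigma_sets_Int_in_sets:
  assumes "B \<in> sigma_sets \<Omega> G" and A: "A \<in> sets F" and "space F = \<Omega>"
    and G: "\<And>g. g \<in> G \<Longrightarrow> g \<inter> A \<in> sets F"
  shows "B \<inter> A \<in> sets F"
  using assms(1)
proof induct
  case (Compl a)
  have "(\<Omega> - a) \<inter> A = A - a \<inter> A" using sets.sets_into_space[OF A] assms(3) by auto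
  then show ?case using Compl A by auto
next
  case (Union a)
  have "(\<Union>i. a i) \<inter> A = (\<Union>i. a i \<inter> A)" by auto
  then show ?case using Union sets.countable_UN[of "\<lambda>i. a i \<inter> A" UNIV F] by auto
qed (auto intro: G)

definition obs_full_gens :: "'a measure \<Rightarrow> 'b measure \<Rightarrow> (nat \<Rightarrow> nat \<Rightarrow> 'a \<Rightarrow> 'b) \<Rightarrow> nat \<Rightarrow> nat
    \<Rightarrow> 'a set set" where
  "obs_full_gens M N X K t =
     {X k s -` B \<inter> space M | k s B. 1 \<le> k \<and> k \<le> K \<and> 1 \<le> s \<and> s \<le> t \<and> B \<in> sets N}"

lemma sets_obs_full: "sets (obs_full M N X K t) = sigma_sets (space M) (obs_full_gens M N X K t)"
  unfolding obs_full_def obs_full_gens_def[symmetric]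
  by (rule sets_measure_of) (auto simp: obs_full_gens_def)

lemma space_obs_full [simp]: "space (obs_full M N X K t) = space M"
  unfolding obs_full_def by (simp add: space_measure_of_conv)

lemma space_in_obs_full: "space M \<in> sets (obs_full M N X K t)"
  using sets.top[of "obs_full M N X K t"] by simp

lemma preimage_in_obs_full:
  "1 \<le> k \<Longrightarrow> k \<le> K \<Longrightarrow> 1 \<le> s \<Longrightarrow> s \<le> t \<Longrightarrow> B \<in> sets N \<Longrightarrow>
   X k s -` B \<inter> space M \<in> sets (obs_full M N X K t)"
  unfolding sets_obs_full obs_full_gens_def by (rule sigma_sets.Basic) blast

lemma obs_full_mono: "t \<le> t' \<Longrightarrow> sets (obs_full M N X K t) \<subseteq> sets (obs_full M N X K t')"
  unfolding sets_obs_full obs_full_gens_def by (rule sigma_sets_subseteq) (use order_trans in blast)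

lemma subalgebra_obs_full:
  assumes "\<And>k t. X k t \<in> measurable M N"
  shows "subalgebra M (obs_full M N X K t)"
proof -
  have "obs_full_gens M N X K t \<subseteq> sets M"
    unfolding obs_full_gens_def using assms measurable_sets by blast
  then show ?thesis
    unfolding subalgebra_def sets_obs_full by (simp add: sets.sigma_sets_subset)
qed

lemma measurable_X_obs_full:
  assumes "\<And>k t. X k t \<in> measurable M N" "1 \<le> k" "k \<le> K" "1 \<le> t"
  shows "X k t \<in> measurable (obs_full M N X K t) N"
  using assms preimage_in_obs_full[of k K t t _ N X M] measurable_space[OF assms(1)]
  by (auto intro!: measurableI)

lemma obs_gens_subset_obs_full:
  assumes all_or_none: "\<And>\<omega>. S \<omega> = {1..K} \<or> S \<omega> = {}"
    and levels: "\<And>s. {\<omega> \<in> space M. S \<omega> = s} \<in> sets (obs_full M N X K t)" and "1 \<le> t"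
  shows "obs_gens M N X S t \<subseteq> sets (obs_full M N X K t)"
proof
  fix A assume "A \<in> obs_gens M N X S t"
  then consider s where "A = {\<omega> \<in> space M. S \<omega> = s}"
    | k B where "A = {\<omega> \<in> space M. k \<in> S \<omega> \<and> X k t \<omega> \<in> B}" "B \<in> sets N"
    unfolding obs_gens_def by blast
  then show "A \<in> sets (obs_full M N X K t)"
  proof cases
    case (2 k B)
    show ?thesis
    proof (cases "k \<in> {1..K}")
      case True
      then have "A = {\<omega> \<in> space M. S \<omega> = {1..K}} \<inter> (X k t -` B \<inter> space M)"
        using 2(1) all_or_none by auto
      moreover have "X k t -` B \<inter> space M \<in> sets (obs_full M N X K t)"
        using True 2(2) \<open>1 \<le> t\<close> by (intro preimage_in_obs_full) auto
      ultimately show ?thesis using levels by auto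
    next
      case False
      then show ?thesis using 2(1) all_or_none
        by (metis (no_types, lifting) empty_Collect_eq empty_iff sets.empty_sets)
    qed
  qed (use levels in simp)
qed

lemma obs_full_Suc_trace:
  assumes all_or_none: "\<And>\<omega>. S \<omega> = {1..K} \<or> S \<omega> = {}" and "space F = space M"
    and old: "\<And>B. B \<in> sets (obs_full M N X K t) \<Longrightarrow> B \<inter> {\<omega> \<in> space M. S \<omega> = {1..K}} \<in> sets F"
    and new: "obs_gens M N X S (Suc t) \<subseteq> sets F"
    and "B \<in> sets (obs_full M N X K (Suc t))"
  shows "B \<inter> {\<omega> \<in> space M. S \<omega> = {1..K}} \<in> sets F"
proof (rule sigma_sets_Int_in_sets[OF _ _ \<open>space F = space M\<close>])
  show "B \<in> sigma_sets (space M) (obs_full_gens M N X K (Suc t))"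
    using assms(5) sets_obs_full by blast
  show A_in: "{\<omega> \<in> space M. S \<omega> = {1..K}} \<in> sets F"
    using new by (auto simp: obs_gens_def)
  fix g assume "g \<in> obs_full_gens M N X K (Suc t)"
  then obtain k s B0 where g: "g = X k s -` B0 \<inter> space M" "1 \<le> k" "k \<le> K" "1 \<le> s"
    "s \<le> Suc t" "B0 \<in> sets N" unfolding obs_full_gens_def by blast
  show "g \<inter> {\<omega> \<in> space M. S \<omega> = {1..K}} \<in> sets F"
  proof (cases "s \<le> t")
    case True
    then show ?thesis using old preimage_in_obs_full[of k K s t B0] g by auto
  next
    case False
    then have "g \<inter> {\<omega> \<in> space M. S \<omega> = {1..K}} = {\<omega> \<in> space M. k \<in> S \<omega> \<and> X k (Suc t) \<omega> \<in> B0}"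
      using g all_or_none by (auto simp: le_Suc_eq)
    also have "\<dots> \<in> sets F" using new g(6) by (auto simp: obs_gens_def)
    finally show ?thesis .
  qed
qed

text \<open>The invariant of the procedure when all streams share the change point. Its last clause
  makes the procedure's posterior agree with W_t as long as every stream is active.\<close>

definition all_or_none_state :: "'a measure \<Rightarrow> 'b measure \<Rightarrow> (nat \<Rightarrow> nat \<Rightarrow> 'a \<Rightarrow> 'b) \<Rightarrow> nat
    \<Rightarrow> nat \<Rightarrow> ('a \<Rightarrow> nat set) \<Rightarrow> 'a measure \<Rightarrow> bool" where
  "all_or_none_state M N X K t S F \<longleftrightarrow>
     (\<forall>\<omega>. S \<omega> = {1..K} \<or> S \<omega> = {}) \<and>
     space F = space M \<and>
     sets F \<subseteq> sets (obs_full M N X K t) \<and>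
     (\<forall>s. {\<omega> \<in> space M. S \<omega> = s} \<in> sets F) \<and>
     (\<forall>B \<in> sets (obs_full M N X K t). B \<inter> {\<omega> \<in> space M. S \<omega> = {1..K}} \<in> sets F)"

lemma all_or_none_state_initial:
  "all_or_none_state M N X K 1 (\<lambda>\<omega>. {1..K}) (sigma (space M) (obs_gens M N X (\<lambda>\<omega>. {1..K}) 1))"
proof -
  let ?G = "obs_gens M N X (\<lambda>\<omega>. {1..K}) 1"
  let ?F = "sigma (space M) ?G"
  have sets_F: "sets ?F = sigma_sets (space M) ?G"
    by (rule sets_measure_of) (auto simp: obs_gens_def)
  have "{\<omega> \<in> space M. {1..K} = s} \<in> sets (obs_full M N X K 1)" for s
    by (cases "{1..K} = s") (auto intro: space_in_obs_full)
  then have "?G \<subseteq> sets (obs_full M N X K 1)"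
    by (intro obs_gens_subset_obs_full) auto
  then have F_le: "sets ?F \<subseteq> sets (obs_full M N X K 1)"
    unfolding sets_F using space_in_obs_full by (intro sets.sigma_sets_subset')
  have "obs_full_gens M N X K 1 \<subseteq> ?G"
  proof
    fix A assume "A \<in> obs_full_gens M N X K 1"
    then obtain k s B where A: "A = X k s -` B \<inter> space M" "k \<in> {1..K}" "s = 1" "B \<in> sets N"
      unfolding obs_full_gens_def by auto
    then have "A = {\<omega> \<in> space M. k \<in> {1..K} \<and> X k 1 \<omega> \<in> B}" by auto
    then show "A \<in> ?G" using A(4) unfolding obs_gens_def by blast
  qed
  then have obs_le: "sets (obs_full M N X K 1) \<subseteq> sets ?F"
    unfolding sets_F sets_obs_full by (rule sigma_sets_mono')
  have "{\<omega> \<in> space M. {1..K} = s} \<in> sets ?F" for s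
    unfolding sets_F by (rule sigma_sets.Basic) (auto simp: obs_gens_def)
  moreover have "B \<inter> {\<omega> \<in> space M. {1..K} = {1..K}} \<in> sets ?F"
    if "B \<in> sets (obs_full M N X K 1)" for B
    using that obs_le sets.sets_into_space[OF that] by (auto simp: Int_absorb2)
  ultimately show ?thesis
    unfolding all_or_none_state_def using F_le by (simp add: space_measure_of_conv)
qed

lemma all_or_none_state_step:
  fixes W :: "'a \<Rightarrow> real" and \<alpha> :: real
  assumes state: "all_or_none_state M N X K t S F" and W: "W \<in> borel_measurable F"
  defines "S' \<equiv> \<lambda>\<omega>. if W \<omega> \<le> \<alpha> then S \<omega> else {}"
  shows "all_or_none_state M N X K (Suc t) S' (sigma (space M) (sets F \<union> obs_gens M N X S' (Suc t)))"
proof -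
  define F' where "F' = sigma (space M) (sets F \<union> obs_gens M N X S' (Suc t))"
  define all where "all = {1..K::nat}"
  have all_or_none: "\<And>\<omega>. S \<omega> = all \<or> S \<omega> = {}" and space_F: "space F = space M"
    and F_le: "sets F \<subseteq> sets (obs_full M N X K t)"
    and levels: "\<And>s. {\<omega> \<in> space M. S \<omega> = s} \<in> sets F"
    and trace: "\<And>B. B \<in> sets (obs_full M N X K t) \<Longrightarrow> B \<inter> {\<omega> \<in> space M. S \<omega> = all} \<in> sets F"
    using state unfolding all_or_none_state_def all_def by auto
  have all_or_none': "\<And>\<omega>. S' \<omega> = all \<or> S' \<omega> = {}"
    using all_or_none by (simp add: S'_def)
  have "{\<omega> \<in> space F. W \<omega> \<le> \<alpha>} \<in> sets F" using W by measurable
  then have W_le: "{\<omega> \<in> space M. W \<omega> \<le> \<alpha>} \<in> sets F" using space_F by simp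
  have levels_old: "{\<omega> \<in> space M. S' \<omega> = s} \<in> sets F" for s
  proof -
    have "{\<omega> \<in> space M. S' \<omega> = s} =
        ({\<omega> \<in> space M. W \<omega> \<le> \<alpha>} \<inter> {\<omega> \<in> space M. S \<omega> = s})
        \<union> (if s = {} then space M - {\<omega> \<in> space M. W \<omega> \<le> \<alpha>} else {})"
      by (auto simp: S'_def)
    moreover have "space M \<in> sets F" using space_F sets.top by metis
    ultimately show ?thesis using W_le levels[of s] by auto
  qed
  let ?G = "sets F \<union> obs_gens M N X S' (Suc t)"
  have sets_F': "sets F' = sigma_sets (space M) ?G"
    unfolding F'_def
    by (rule sets_measure_of) (use sets.space_closed[of F] space_F in \<open>auto simp: obs_gens_def\<close>)
  have space_F': "space F' = space M"
    unfolding F'_def by (simp add: space_measure_of_conv)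
  have F_le_F': "sets F \<subseteq> sets F'" unfolding sets_F' by auto
  have gens_in: "A \<in> obs_gens M N X S' (Suc t) \<Longrightarrow> A \<in> sets F'" for A
    unfolding sets_F' by auto
  have levels': "{\<omega> \<in> space M. S' \<omega> = s} \<in> sets F'" for s
    by (rule gens_in) (auto simp: obs_gens_def)
  have F_le_obs: "sets F \<subseteq> sets (obs_full M N X K (Suc t))"
    using F_le obs_full_mono[of t "Suc t" M N X K] by auto
  have "obs_gens M N X S' (Suc t) \<subseteq> sets (obs_full M N X K (Suc t))"
    by (rule obs_gens_subset_obs_full) (use all_or_none' levels_old F_le_obs in \<open>auto simp: all_def\<close>)
  then have "?G \<subseteq> sets (obs_full M N X K (Suc t))" using F_le_obs by blast
  then have F'_le: "sets F' \<subseteq> sets (obs_full M N X K (Suc t))"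
    unfolding sets_F' using space_in_obs_full by (intro sets.sigma_sets_subset')
  have trace': "B \<inter> {\<omega> \<in> space M. S' \<omega> = all} \<in> sets F'"
    if "B \<in> sets (obs_full M N X K (Suc t))" for B
  proof (rule obs_full_Suc_trace[OF _ space_F' _ _ that, folded all_def])
    show "B \<inter> {\<omega> \<in> space M. S' \<omega> = all} \<in> sets F'" if "B \<in> sets (obs_full M N X K t)" for B
    proof -
      have "B \<inter> {\<omega> \<in> space M. S' \<omega> = all}
          = (B \<inter> {\<omega> \<in> space M. S \<omega> = all}) \<inter> {\<omega> \<in> space M. S' \<omega> = all}"
        using all_or_none by (auto simp: S'_def)
      then show ?thesis using trace[OF that] F_le_F' levels' by auto
    qed
    show "obs_gens M N X S' (Suc t) \<subseteq> sets F'" using gens_in by blast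
  qed (use all_or_none' in \<open>auto simp: all_def\<close>)
  show ?thesis
    unfolding all_or_none_state_def F'_def[symmetric]
    using all_or_none' space_F' F'_le levels' trace' unfolding all_def by auto
qed

context
  fixes M :: "'a measure" and N :: "'b measure" and X :: "nat \<Rightarrow> nat \<Rightarrow> 'a \<Rightarrow> 'b"
    and tau0 :: "'a \<Rightarrow> nat" and \<alpha> :: real and K :: nat
  assumes X_measurable: "\<And>k t. X k t \<in> measurable M N" and \<alpha>_nonneg: "0 \<le> \<alpha>"
begin

text \<open>act n, info n and post n are S_{n+1}, F_{n+1} and the common posterior W_{k,n+1}.\<close>

abbreviation "act n \<equiv> fst (proc_SF M N X (\<lambda>_. tau0) \<alpha> K n)"
abbreviation "info n \<equiv> snd (proc_SF M N X (\<lambda>_. tau0) \<alpha> K n)"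
abbreviation "post n \<equiv> real_cond_exp M (info n) (indicator {x \<in> space M. tau0 x < Suc n})"

lemma act_Suc: "act (Suc n) = (\<lambda>\<omega>. onestep \<alpha> (act n \<omega>) (\<lambda>k. post n \<omega>))"
  by (simp add: Let_def)

lemma info_Suc:
  "info (Suc n) = sigma (space M) (sets (info n) \<union> obs_gens M N X (act (Suc n)) (Suc (Suc n)))"
  by (simp add: Let_def)

declare proc_SF.simps(2) [simp del]

lemma act_Suc_all_or_none:
  assumes "act n \<omega> = {1..K} \<or> act n \<omega> = {}"
  shows "act (Suc n) \<omega> = (if post n \<omega> \<le> \<alpha> then act n \<omega> else {})"
proof -
  have "finite (act n \<omega>)" using assms by auto
  then show ?thesis unfolding act_Suc by (simp add: onestep_constant[OF _ \<alpha>_nonneg])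
qed

lemma proc_state: "all_or_none_state M N X K (Suc n) (act n) (info n)"
proof (induct n)
  case 0
  show ?case using all_or_none_state_initial by simp
next
  case (Suc n)
  then have "act (Suc n) = (\<lambda>\<omega>. if post n \<omega> \<le> \<alpha> then act n \<omega> else {})"
    using act_Suc_all_or_none by (auto simp: all_or_none_state_def)
  then show ?case
    using all_or_none_state_step[OF Suc, of "post n" \<alpha>] info_Suc[of n] by simp
qed

lemma
  shows act_all_or_none: "act n \<omega> = {1..K} \<or> act n \<omega> = {}"
    and space_info: "space (info n) = space M"
    and info_le_obs_full: "sets (info n) \<subseteq> sets (obs_full M N X K (Suc n))"
    and act_level_sets: "{\<omega> \<in> space M. act n \<omega> = s} \<in> sets (info n)"
    and all_active_trace:
      "B \<in> sets (obs_full M N X K (Suc n)) \<Longrightarrow> B \<inter> {\<omega> \<in> space M. act n \<omega> = {1..K}} \<in> sets (info n)"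
  using proc_state[of n] unfolding all_or_none_state_def by blast+

lemma post_eq_post_W:
  assumes P: "prob_space M" and "tau0 \<in> measurable M (count_space UNIV)"
  shows "AE \<omega> in M. act n \<omega> = {1..K} \<longrightarrow> post n \<omega> = post_W M N X tau0 K (Suc n) \<omega>"
proof -
  have "{x \<in> space M. tau0 x < Suc n} \<in> sets M" using assms(2) by measurable
  then have integrable: "integrable M (indicator {x \<in> space M. tau0 x < Suc n} :: 'a \<Rightarrow> real)"
    using P by (intro finite_measure.integrable_const_bound[of M _ 1]) (auto simp: prob_space_def)
  have "subalgebra (obs_full M N X K (Suc n)) (info n)"
    unfolding subalgebra_def using space_info info_le_obs_full by simp
  from real_cond_exp_eq_on_trace[OF P subalgebra_obs_full[OF X_measurable] this
      act_level_sets _ integrable]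
  have "AE \<omega> in M. \<omega> \<in> {\<omega> \<in> space M. act n \<omega> = {1..K}} \<longrightarrow>
     post n \<omega> = post_W M N X tau0 K (Suc n) \<omega>"
    unfolding post_W_def using all_active_trace by blast
  then show ?thesis using AE_space by eventually_elim auto
qed

lemma act_eq_if_below:
  assumes "\<forall>n. act n \<omega> = {1..K} \<longrightarrow> post n \<omega> = w (Suc n)"
  shows "act n \<omega> = (if \<forall>s\<in>{1..n}. w s \<le> \<alpha> then {1..K} else {})"
proof (induct n)
  case (Suc n)
  let ?below = "\<lambda>n. \<forall>s\<in>{1..n}. w s \<le> \<alpha>"
  have step: "act (Suc n) \<omega> = (if post n \<omega> \<le> \<alpha> then act n \<omega> else {})"
    by (rule act_Suc_all_or_none[OF act_all_or_none])
  have below_Suc: "?below (Suc n) \<longleftrightarrow> ?below n \<and> w (Suc n) \<le> \<alpha>"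
    by (auto simp: le_Suc_eq)
  show ?case
  proof (cases "?below n")
    case True
    then have "act n \<omega> = {1..K}" using Suc by simp
    moreover from this have "post n \<omega> = w (Suc n)" using assms by blast
    ultimately show ?thesis using step below_Suc True by simp
  next
    case False
    then have "act (Suc n) \<omega> = {}" using Suc step by (simp only: if_not_P[OF False] if_False if_cancel)
    moreover have not_below: "\<not> ?below (Suc n)" using below_Suc False by blast
    ultimately show ?thesis by (simp only: if_not_P[OF not_below] if_False)
  qed
qed simp

lemma proc_S_eq_post_W:
  assumes "prob_space M" and "tau0 \<in> measurable M (count_space UNIV)"
  shows "AE \<omega> in M. \<forall>n. proc_S M N X (\<lambda>_. tau0) \<alpha> K (Suc n) \<omega>
    = (if \<forall>s\<in>{1..n}. post_W M N X tau0 K s \<omega> \<le> \<alpha> then {1..K} else {})"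
proof -
  have "AE \<omega> in M. \<forall>n. act n \<omega> = {1..K} \<longrightarrow> post n \<omega> = post_W M N X tau0 K (Suc n) \<omega>"
    unfolding AE_all_countable using post_eq_post_W[OF assms] by blast
  then show ?thesis
    unfolding proc_S_def diff_Suc_1
  proof eventually_elim
    case (elim \<omega>)
    then show ?case using act_eq_if_below[of \<omega> "\<lambda>s. post_W M N X tau0 K s \<omega>"] by blast
  qed
qed

lemma subalgebra_info: "subalgebra M (info n)"
proof -
  have "sets (obs_full M N X K (Suc n)) \<subseteq> sets M"
    using subalgebra_obs_full[OF X_measurable] by (simp add: subalgebra_def)
  then show ?thesis
    unfolding subalgebra_def using space_info[of n] info_le_obs_full[of n] by simp
qed

lemma active_event_in_info: "{\<omega> \<in> space M. act (Suc n) \<omega> \<noteq> {}} \<in> sets (info n)"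
proof -
  define F where "F = info n"
  define W where "W = post n"
  define S where "S = act n"
  have step: "act (Suc n) \<omega> = (if W \<omega> \<le> \<alpha> then S \<omega> else {})" for \<omega>
    unfolding S_def W_def by (rule act_Suc_all_or_none[OF act_all_or_none])
  have "{\<omega> \<in> space M. act (Suc n) \<omega> \<noteq> {}}
      = {\<omega> \<in> space F. W \<omega> \<le> \<alpha>} \<inter> (space M - {\<omega> \<in> space M. S \<omega> = {}})"
    unfolding F_def space_info by (auto simp: step)
  moreover have "{\<omega> \<in> space F. W \<omega> \<le> \<alpha>} \<in> sets F" unfolding W_def F_def by measurable
  moreover have "space M - {\<omega> \<in> space M. S \<omega> = {}} \<in> sets F"
    using act_level_sets[of n "{}"] sets.compl_sets[of _ F] space_info unfolding S_def F_def by metis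
  ultimately show ?thesis unfolding F_def by auto
qed

lemma proc_FNP_next_eq:
  assumes "\<omega> \<in> space M"
  shows "proc_FNP_next M N X (\<lambda>_. tau0) \<alpha> K (Suc n) \<omega>
    = indicator {\<omega> \<in> space M. act (Suc n) \<omega> \<noteq> {}} \<omega> * indicator {x \<in> space M. tau0 x < Suc n} \<omega>"
proof -
  define S where "S = act (Suc n)"
  show ?thesis
    using assms act_all_or_none[of "Suc n" \<omega>] unfolding S_def[symmetric]
    by (cases "K = 0") (auto simp: proc_FNP_next_def proc_S_def S_def)
qed

lemma proc_LFNR_next_eq:
  assumes P: "prob_space M" and tau0: "tau0 \<in> measurable M (count_space UNIV)" and "1 \<le> t"
  shows "AE \<omega> in M. proc_LFNR_next M N X (\<lambda>_. tau0) \<alpha> K t \<omega>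
     = (if proc_S M N X (\<lambda>_. tau0) \<alpha> K (Suc t) \<omega> \<noteq> {} then post_W M N X tau0 K t \<omega> else 0)"
proof -
  obtain n where n: "t = Suc n" using \<open>1 \<le> t\<close> by (cases t) auto
  define F where "F = info n"
  define E where "E = {x \<in> space M. tau0 x < Suc n}"
  define A where "A = {\<omega> \<in> space M. act (Suc n) \<omega> \<noteq> {}}"
  interpret F: sigma_finite_subalgebra M F
    unfolding F_def using prob_space_sigma_finite_subalgebra[OF P subalgebra_info] .
  have E_in [measurable]: "E \<in> sets M" unfolding E_def using tau0 by measurable
  have A_in: "A \<in> sets F" unfolding A_def F_def by (rule active_event_in_info)
  then have [measurable]: "A \<in> sets M" using subalgebra_info[of n] by (auto simp: F_def subalgebra_def)
  have FNP_eq: "proc_FNP_next M N X (\<lambda>_. tau0) \<alpha> K (Suc n) \<omega> = indicator A \<omega> * indicator E \<omega>"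
    if "\<omega> \<in> space M" for \<omega>
    unfolding A_def E_def using that by (rule proc_FNP_next_eq)
  have product_measurable [measurable]:
    "(\<lambda>\<omega>. indicator A \<omega> * indicator E \<omega> :: real) \<in> borel_measurable M" by measurable
  then have "proc_FNP_next M N X (\<lambda>_. tau0) \<alpha> K (Suc n) \<in> borel_measurable M"
    by (subst measurable_cong[where g="\<lambda>\<omega>. indicator A \<omega> * indicator E \<omega>"]) (auto simp: FNP_eq)
  then have "AE \<omega> in M. proc_LFNR_next M N X (\<lambda>_. tau0) \<alpha> K t \<omega>
      = real_cond_exp M F (\<lambda>\<omega>. indicator A \<omega> * indicator E \<omega>) \<omega>"
    unfolding proc_LFNR_next_def proc_F_def n diff_Suc_1 F_def[symmetric]
    by (intro F.real_cond_exp_cong) (auto simp: FNP_eq intro: AE_I2)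
  moreover have "integrable M (\<lambda>\<omega>. indicator A \<omega> * indicator E \<omega> :: real)"
    by (intro finite_measure.integrable_const_bound[of M _ 1] prob_space.finite_measure[OF P]
        product_measurable) (auto simp: indicator_def)
  then have "AE \<omega> in M. real_cond_exp M F (\<lambda>\<omega>. indicator A \<omega> * indicator E \<omega>) \<omega>
      = indicator A \<omega> * real_cond_exp M F (indicator E) \<omega>"
    by (intro F.real_cond_exp_mult) (use A_in in auto)
  moreover have "AE \<omega> in M. act n \<omega> = {1..K} \<longrightarrow> real_cond_exp M F (indicator E) \<omega> = post_W M N X tau0 K t \<omega>"
    unfolding F_def E_def n by (rule post_eq_post_W[OF P tau0])
  ultimately show ?thesis
    using AE_space
  proof eventually_elim
    case (elim \<omega>)
    have "act (Suc n) \<omega> \<noteq> {} \<Longrightarrow> act n \<omega> = {1..K}"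
      using act_all_or_none[of n \<omega>] act_Suc_all_or_none[OF act_all_or_none, of n \<omega>]
      by (auto split: if_splits)
    then show ?case using elim by (auto simp: n proc_S_def A_def)
  qed
qed

end

section \<open>Stopping times\<close>

lemma SUP_active_times_eq_first_exceedance:
  fixes w :: "nat \<Rightarrow> real"
  shows "(SUP t \<in> {t. 1 \<le> t \<and> (\<forall>s\<in>{1..t-1}. w s \<le> \<alpha>)}. enat t)
     = (if \<exists>t\<ge>1. w t > \<alpha> then enat (LEAST t. 1 \<le> t \<and> w t > \<alpha>) else \<infinity>)"
proof (cases "\<exists>t\<ge>1. w t > \<alpha>")
  case True
  define L where "L = (LEAST t. 1 \<le> t \<and> w t > \<alpha>)"
  have L: "1 \<le> L" "w L > \<alpha>" unfolding L_def using LeastI_ex[OF True[simplified Bex_def]] by auto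
  have before_L: "w s \<le> \<alpha>" if "1 \<le> s" "s < L" for s
    unfolding L_def using not_less_Least[of s "\<lambda>t. 1 \<le> t \<and> w t > \<alpha>"] that L_def by fastforce
  have "{t. 1 \<le> t \<and> (\<forall>s\<in>{1..t-1}. w s \<le> \<alpha>)} = {1..L}"
  proof (intro set_eqI iffI)
    fix t assume t: "t \<in> {t. 1 \<le> t \<and> (\<forall>s\<in>{1..t-1}. w s \<le> \<alpha>)}"
    show "t \<in> {1..L}"
    proof (rule ccontr)
      assume "t \<notin> {1..L}"
      then have "L \<in> {1..t-1}" using t L by auto
      then have "w L \<le> \<alpha>" using t by blast
      then show False using L by simp
    qed
  qed (use before_L in auto)
  moreover have "(SUP t \<in> {1..L}. enat t) = enat L"
  proof (rule antisym)
    show "(SUP t \<in> {1..L}. enat t) \<le> enat L" by (rule SUP_least) auto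
    show "enat L \<le> (SUP t \<in> {1..L}. enat t)" by (rule SUP_upper) (use L in auto)
  qed
  ultimately show ?thesis using True unfolding L_def by simp
next
  case False
  then have "{t. 1 \<le> t \<and> (\<forall>s\<in>{1..t-1}. w s \<le> \<alpha>)} = {1..}" by (auto simp: not_less)
  moreover have "infinite (enat ` {1::nat..})"
    using infinite_Ici[of "1::nat"] by (auto dest: finite_imageD simp: inj_on_def)
  ultimately show ?thesis using False by (simp add: Sup_enat_def)
qed

lemma proc_T_eq_stop_T:
  assumes "\<And>k t. X k t \<in> measurable M N" "0 \<le> \<alpha>" "prob_space M"
    "tau0 \<in> measurable M (count_space UNIV)"
  shows "AE \<omega> in M. \<forall>k \<in> {1..K}. proc_T M N X (\<lambda>_. tau0) \<alpha> K k \<omega> = stop_T M N X tau0 \<alpha> K \<omega>"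
  using proc_S_eq_post_W[where X=X and K=K, OF assms]
proof eventually_elim
  case (elim \<omega>)
  have active: "k \<in> proc_S M N X (\<lambda>_. tau0) \<alpha> K t \<omega> \<longleftrightarrow> (\<forall>s\<in>{1..t-1}. post_W M N X tau0 K s \<omega> \<le> \<alpha>)"
    if "1 \<le> t" "k \<in> {1..K}" for t k
  proof -
    obtain n where "t = Suc n" using \<open>1 \<le> t\<close> by (cases t) auto
    then show ?thesis using elim that by simp
  qed
  show ?case
  proof
    fix k assume "k \<in> {1..K}"
    then have "{t. 1 \<le> t \<and> k \<in> proc_S M N X (\<lambda>_. tau0) \<alpha> K t \<omega>}
        = {t. 1 \<le> t \<and> (\<forall>s\<in>{1..t-1}. post_W M N X tau0 K s \<omega> \<le> \<alpha>)}"
      using active by blast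
    then show "proc_T M N X (\<lambda>_. tau0) \<alpha> K k \<omega> = stop_T M N X tau0 \<alpha> K \<omega>"
      unfolding proc_T_def stop_T_def by (simp only: SUP_active_times_eq_first_exceedance)
  qed
qed

section \<open>Consistency of the posterior as the number of streams grows\<close>

lemma time_slice_event_in_sets:
  assumes "\<And>k. X k t \<in> measurable M N" "finite J" "\<forall>k\<in>J. B k \<in> sets N"
  shows "{\<omega> \<in> space M. \<forall>k\<in>J. X k t \<omega> \<in> B k} \<in> sets M"
  using assms(2,3)
proof (induct J rule: finite_induct)
  case (insert k J)
  have "{\<omega> \<in> space M. \<forall>k\<in>insert k J. X k t \<omega> \<in> B k} =
     {\<omega> \<in> space M. \<forall>k\<in>J. X k t \<omega> \<in> B k} \<inter> (X k t -` B k \<inter> space M)" by auto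
  moreover have "X k t -` B k \<inter> space M \<in> sets M" using assms(1) insert(4) measurable_sets by auto
  ultimately show ?case using insert by auto
qed simp

text \<open>freq_test X B b \<delta> K t predicts \<tau>0 < t when the frequency of X k t \<in> B among the
  first K streams is within \<delta> of b, the probability of B under the post-change density.\<close>

definition freq_test :: "(nat \<Rightarrow> nat \<Rightarrow> 'a \<Rightarrow> 'b) \<Rightarrow> 'b set \<Rightarrow> real \<Rightarrow> real \<Rightarrow> nat \<Rightarrow> nat \<Rightarrow> 'a \<Rightarrow> real"
  where "freq_test X B b \<delta> K t \<omega> =
    (if \<bar>(\<Sum>k\<in>{1..K}. indicator B (X k t \<omega>)) - real K * b\<bar> < real K * \<delta> then 1 else 0)"

lemma borel_measurable_freq_test:
  assumes "\<And>k t. X k t \<in> measurable M N" "1 \<le> t" "B \<in> sets N"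
  shows "freq_test X B b \<delta> K t \<in> borel_measurable (obs_full M N X K t)"
proof -
  have "(\<lambda>\<omega>. \<Sum>k\<in>{1..K}. indicator B (X k t \<omega>) :: real) \<in> borel_measurable (obs_full M N X K t)"
  proof (rule borel_measurable_sum)
    fix k assume "k \<in> {1..K}"
    then have [measurable]: "X k t \<in> measurable (obs_full M N X K t) N"
      using measurable_X_obs_full[where X=X, OF assms(1)] assms(2) by auto
    show "(\<lambda>\<omega>. indicator B (X k t \<omega>) :: real) \<in> borel_measurable (obs_full M N X K t)"
      using assms(3) by measurable
  qed
  then show ?thesis unfolding freq_test_def by measurable
qed

context
  fixes M :: "'a measure" and N :: "'b measure"
    and X :: "nat \<Rightarrow> nat \<Rightarrow> 'a \<Rightarrow> 'b" and tau0 :: "'a \<Rightarrow> nat"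
    and p q :: "'b \<Rightarrow> real" and \<theta> :: real
  assumes P: "prob_space M"
    and \<theta>: "0 < \<theta>" "\<theta> < 1"
    and tau0_measurable: "tau0 \<in> measurable M (count_space UNIV)"
    and X_measurable: "\<And>k t. X k t \<in> measurable M N"
    and geom: "\<And>m. measure M {\<omega> \<in> space M. tau0 \<omega> = m} = \<theta> * (1 - \<theta>) ^ m"
    and cond: "\<And>m J B. finite J \<Longrightarrow> J \<subseteq> {1..} \<times> {1..} \<Longrightarrow> (\<forall>j\<in>J. B j \<in> sets N) \<Longrightarrow>
        measure M {\<omega> \<in> space M. tau0 \<omega> = m \<and> (\<forall>(k, t) \<in> J. X k t \<omega> \<in> B (k, t))}
        = measure M {\<omega> \<in> space M. tau0 \<omega> = m} *
          (\<Prod>(k, t) \<in> J. measure (density N (\<lambda>z. ennreal (if t \<le> m then p z else q z))) (B (k, t)))"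
begin

lemma change_point_event_in_sets: "{\<omega> \<in> space M. tau0 \<omega> \<in> Ms} \<in> sets M"
  using tau0_measurable by measurable

lemma measure_change_point_time_slice:
  assumes "finite J" "J \<subseteq> {1..}" "\<forall>k\<in>J. B k \<in> sets N" "1 \<le> t"
  shows "measure M {\<omega> \<in> space M. tau0 \<omega> = m \<and> (\<forall>k\<in>J. X k t \<omega> \<in> B k)}
    = measure M {\<omega> \<in> space M. tau0 \<omega> = m} *
      (\<Prod>k\<in>J. measure (density N (\<lambda>z. ennreal (if t \<le> m then p z else q z))) (B k))"
proof -
  have "finite ((\<lambda>k. (k, t)) ` J)" "(\<lambda>k. (k, t)) ` J \<subseteq> {1..} \<times> {1..}"
    "\<forall>j\<in>(\<lambda>k. (k, t)) ` J. (\<lambda>(k, s). B k) j \<in> sets N"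
    using assms by auto
  from cond[OF this, of m] show ?thesis
    by (auto simp: prod.reindex inj_on_def intro!: arg_cong[where f="measure M"])
qed

lemma measure_sums_over_change_point:
  assumes "D \<in> sets M"
  shows "(\<lambda>m. measure M ({\<omega> \<in> space M. tau0 \<omega> = m} \<inter> D)) sums measure M D"
proof -
  interpret prob_space M by (rule P)
  have "(\<lambda>m. measure M ({\<omega> \<in> space M. tau0 \<omega> = m} \<inter> D)) sums
      measure M (\<Union>m. {\<omega> \<in> space M. tau0 \<omega> = m} \<inter> D)"
    by (rule finite_measure_UNION) (use assms tau0_measurable in \<open>auto simp: disjoint_family_on_def\<close>)
  moreover have "(\<Union>m. {\<omega> \<in> space M. tau0 \<omega> = m} \<inter> D) = D"
    using sets.sets_into_space[OF assms] by auto
  ultimately show ?thesis by simp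
qed

lemma measure_change_class_time_slice:
  assumes "finite J" "J \<subseteq> {1..}" and B: "\<forall>k\<in>J. B k \<in> sets N" and "1 \<le> t"
    and side: "\<And>m. m \<in> Ms \<Longrightarrow> (t \<le> m) = before"
  shows "measure M ({\<omega> \<in> space M. tau0 \<omega> \<in> Ms} \<inter> {\<omega> \<in> space M. \<forall>k\<in>J. X k t \<omega> \<in> B k})
    = measure M {\<omega> \<in> space M. tau0 \<omega> \<in> Ms} *
      (\<Prod>k\<in>J. measure (density N (\<lambda>z. ennreal (if before then p z else q z))) (B k))"
proof -
  define C where "C = {\<omega> \<in> space M. tau0 \<omega> \<in> Ms}"
  define D where "D = {\<omega> \<in> space M. \<forall>k\<in>J. X k t \<omega> \<in> B k}"
  define \<pi> where "\<pi> = (\<Prod>k\<in>J. measure (density N (\<lambda>z. ennreal (if before then p z else q z))) (B k))"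
  have C_in: "C \<in> sets M" unfolding C_def by (rule change_point_event_in_sets)
  have D_in: "D \<in> sets M" unfolding D_def using X_measurable assms(1) B by (rule time_slice_event_in_sets)
  have "measure M ({\<omega> \<in> space M. tau0 \<omega> = m} \<inter> (C \<inter> D))
      = \<pi> * measure M ({\<omega> \<in> space M. tau0 \<omega> = m} \<inter> C)" for m
  proof (cases "m \<in> Ms")
    case True
    then have "{\<omega> \<in> space M. tau0 \<omega> = m} \<inter> (C \<inter> D)
        = {\<omega> \<in> space M. tau0 \<omega> = m \<and> (\<forall>k\<in>J. X k t \<omega> \<in> B k)}"
      "{\<omega> \<in> space M. tau0 \<omega> = m} \<inter> C = {\<omega> \<in> space M. tau0 \<omega> = m}"
      by (auto simp: C_def D_def)
    then show ?thesis
      using measure_change_point_time_slice[OF assms(1-4)] side[OF True] by (simp add: \<pi>_def)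
  next
    case False
    then have "{\<omega> \<in> space M. tau0 \<omega> = m} \<inter> C = {}" by (auto simp: C_def)
    then show ?thesis by (metis Int_assoc Int_commute inf_bot_right measure_empty mult_zero_right)
  qed
  then have "(\<lambda>m. \<pi> * measure M ({\<omega> \<in> space M. tau0 \<omega> = m} \<inter> C)) sums measure M (C \<inter> D)"
    using measure_sums_over_change_point[of "C \<inter> D"] C_in D_in by auto
  moreover have "(\<lambda>m. \<pi> * measure M ({\<omega> \<in> space M. tau0 \<omega> = m} \<inter> C)) sums (\<pi> * measure M C)"
    by (rule sums_mult[OF measure_sums_over_change_point[OF C_in]])
  ultimately show ?thesis unfolding C_def D_def \<pi>_def by (simp add: sums_unique2 mult.commute)
qed

lemma indep_time_slice_given_change_class:
  assumes "1 \<le> t" and side: "\<And>m. m \<in> Ms \<Longrightarrow> (t \<le> m) = before"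
    and pos: "measure M {\<omega> \<in> space M. tau0 \<omega> \<in> Ms} > 0"
  defines "Mc \<equiv> uniform_measure M {\<omega> \<in> space M. tau0 \<omega> \<in> Ms}"
  shows "prob_space Mc"
    and "prob_space.indep_vars Mc (\<lambda>_. N) (\<lambda>k. X k t) {1..}"
    and "\<And>k A. 1 \<le> k \<Longrightarrow> A \<in> sets N \<Longrightarrow>
      measure Mc (X k t -` A \<inter> space M) = measure (density N (\<lambda>z. ennreal (if before then p z else q z))) A"
proof -
  interpret prob_space M by (rule P)
  define C where "C = {\<omega> \<in> space M. tau0 \<omega> \<in> Ms}"
  have C_in: "C \<in> sets M" unfolding C_def by (rule change_point_event_in_sets)
  have C_pos: "emeasure M C \<noteq> 0" and C_fin: "emeasure M C \<noteq> \<infinity>"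
    using pos by (simp_all add: C_def emeasure_eq_measure)
  show Mc: "prob_space Mc"
    unfolding Mc_def C_def[symmetric] by (rule prob_space_uniform_measure[OF C_pos C_fin])
  interpret Mc: prob_space Mc by (rule Mc)
  have sets_Mc: "sets Mc = sets M" and space_Mc: "space Mc = space M" unfolding Mc_def by auto
  have measure_Mc: "measure Mc A = measure M (C \<inter> A) / measure M C" if "A \<in> sets M" for A
    unfolding Mc_def C_def[symmetric] using measure_uniform_measure[OF C_pos C_fin that] .
  have slice: "measure Mc {\<omega> \<in> space M. \<forall>k\<in>J. X k t \<omega> \<in> B k}
      = (\<Prod>k\<in>J. measure (density N (\<lambda>z. ennreal (if before then p z else q z))) (B k))"
    if "finite J" "J \<subseteq> {1..}" "\<forall>k\<in>J. B k \<in> sets N" for J B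
    using measure_change_class_time_slice[where Ms=Ms and before=before, OF that \<open>1 \<le> t\<close> side]
      measure_Mc[OF time_slice_event_in_sets[of X t M N, OF X_measurable that(1,3)]] pos
    by (simp add: C_def)
  show marginal:
    "measure Mc (X k t -` A \<inter> space M) = measure (density N (\<lambda>z. ennreal (if before then p z else q z))) A"
    if "1 \<le> k" "A \<in> sets N" for k A
    using slice[of "{k}" "\<lambda>_. A"] that by (simp add: vimage_def Int_def conj_commute)
  have X_Mc: "X k t \<in> measurable Mc N" for k
    using X_measurable[of k t] measurable_cong_sets[OF sets_Mc refl, of N] by simp
  show "Mc.indep_vars (\<lambda>_. N) (\<lambda>k. X k t) {1..}"
    unfolding Mc.indep_vars_def2
  proof (intro conjI ballI Mc.indep_setsI)
    show "X k t \<in> measurable Mc N" for k by (rule X_Mc)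
    show "{X k t -` B \<inter> space Mc |B. B \<in> sets N} \<subseteq> Mc.events" for k
      using X_Mc measurable_sets by blast
  next
    fix J A assume J: "J \<noteq> {}" "J \<subseteq> {1..}" "finite J"
      and A: "\<forall>j\<in>J. A j \<in> {X j t -` B \<inter> space Mc |B. B \<in> sets N}"
    then have "\<forall>j\<in>J. \<exists>B. A j = X j t -` B \<inter> space M \<and> B \<in> sets N"
      by (auto simp: space_Mc)
    then obtain B where B: "\<And>j. j \<in> J \<Longrightarrow> A j = X j t -` B j \<inter> space M \<and> B j \<in> sets N"
      by metis
    have "(\<Inter>j\<in>J. A j) = {\<omega> \<in> space M. \<forall>k\<in>J. X k t \<omega> \<in> B k}"
      using B J(1) by auto
    then have "Mc.prob (\<Inter>j\<in>J. A j)
        = (\<Prod>k\<in>J. measure (density N (\<lambda>z. ennreal (if before then p z else q z))) (B k))"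
      using slice[OF J(3,2)] B by simp
    also have "\<dots> = (\<Prod>j\<in>J. Mc.prob (A j))"
      using B marginal J(2) by (intro prod.cong) auto
    finally show "Mc.prob (\<Inter>j\<in>J. A j) = (\<Prod>j\<in>J. Mc.prob (A j))" .
  qed
qed

lemma hoeffding_given_change_class:
  assumes "1 \<le> t" and side: "\<And>m. m \<in> Ms \<Longrightarrow> (t \<le> m) = before"
    and pos: "measure M {\<omega> \<in> space M. tau0 \<omega> \<in> Ms} > 0"
    and B: "B \<in> sets N" and "1 \<le> K" and "0 \<le> \<epsilon>"
  shows "measure M ({\<omega> \<in> space M. tau0 \<omega> \<in> Ms} \<inter>
      {\<omega> \<in> space M. \<bar>(\<Sum>k\<in>{1..K}. indicator B (X k t \<omega>))
          - real K * measure (density N (\<lambda>z. ennreal (if before then p z else q z))) B\<bar> \<ge> \<epsilon>})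
      \<le> 2 * exp (- 2 * \<epsilon>\<^sup>2 / real K)"
proof -
  interpret prob_space M by (rule P)
  define C where "C = {\<omega> \<in> space M. tau0 \<omega> \<in> Ms}"
  define Mc where "Mc = uniform_measure M C"
  note Mc_facts = indep_time_slice_given_change_class[OF \<open>1 \<le> t\<close> side pos, folded C_def Mc_def]
  interpret Mc: prob_space Mc by (rule Mc_facts(1))
  have space_Mc: "space Mc = space M" unfolding Mc_def by auto
  define Y where "Y = (\<lambda>k \<omega>. indicator B (X k t \<omega>) :: real)"
  have "Mc.indep_vars (\<lambda>_. N) (\<lambda>k. X k t) {1..K}"
    using Mc_facts(2) by (rule Mc.indep_vars_subset) auto
  then have indep: "Mc.indep_vars (\<lambda>_. borel) Y {1..K}"
    unfolding Y_def by (rule Mc.indep_vars_compose2) (use B in simp)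
  have mean: "Mc.expectation (Y k) = measure (density N (\<lambda>z. ennreal (if before then p z else q z))) B"
    if "k \<in> {1..K}" for k
  proof -
    have "Mc.expectation (Y k) = Mc.expectation (indicator (X k t -` B \<inter> space M))"
      by (rule Bochner_Integration.integral_cong) (auto simp: Y_def space_Mc indicator_def)
    also have "\<dots> = Mc.prob (X k t -` B \<inter> space M)"
      using measurable_sets[OF X_measurable B] by (simp add: Mc_def)
    finally show ?thesis using Mc_facts(3)[of k B] that B by simp
  qed
  interpret H: Hoeffding_ineq Mc "{1..K}" Y "\<lambda>_. 0" "\<lambda>_. 1" "\<Sum>i\<in>{1..K}. Mc.expectation (Y i)"
  proof unfold_locales
    show "Mc.indep_vars (\<lambda>_. borel) Y {1..K}" by (rule indep)
    show "AE x in Mc. Y i x \<in> {0..1}" for i by (simp add: Y_def indicator_def)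
  qed simp
  define Ev where "Ev = {\<omega> \<in> space M.
    \<bar>(\<Sum>k\<in>{1..K}. indicator B (X k t \<omega>)) - real K * measure (density N (\<lambda>z. ennreal (if before then p z else q z))) B\<bar>
      \<ge> \<epsilon>}"
  have "(\<lambda>\<omega>. \<Sum>k\<in>{1..K}. indicator B (X k t \<omega>) :: real) \<in> borel_measurable M"
    by (rule borel_measurable_sum) (use B X_measurable in measurable)
  then have Ev_in: "Ev \<in> sets M" unfolding Ev_def by measurable
  have "Mc.prob Ev = measure M (C \<inter> Ev) / measure M C"
    unfolding Mc_def using pos by (intro measure_uniform_measure Ev_in) (auto simp: C_def emeasure_eq_measure)
  then have "measure M (C \<inter> Ev) = measure M C * Mc.prob Ev"
    using pos by (simp add: C_def)
  also have "\<dots> \<le> Mc.prob Ev" by (intro mult_left_le_one_le) auto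
  also have "Mc.prob Ev \<le> 2 * exp (- 2 * \<epsilon>\<^sup>2 / real K)"
    using H.Hoeffding_ineq_abs_ge[OF \<open>0 \<le> \<epsilon>\<close>] \<open>1 \<le> K\<close> mean
    by (simp add: Ev_def Y_def space_Mc)
  finally show ?thesis unfolding C_def Ev_def .
qed

lemma measure_change_classes_pos:
  assumes "1 \<le> t"
  shows "measure M {\<omega> \<in> space M. tau0 \<omega> \<in> {m. m < t}} > 0"
    and "measure M {\<omega> \<in> space M. tau0 \<omega> \<in> {m. t \<le> m}} > 0"
proof -
  interpret prob_space M by (rule P)
  have "prob {\<omega> \<in> space M. tau0 \<omega> = 0} \<le> prob {\<omega> \<in> space M. tau0 \<omega> \<in> {m. m < t}}"
    "prob {\<omega> \<in> space M. tau0 \<omega> = t} \<le> prob {\<omega> \<in> space M. tau0 \<omega> \<in> {m. t \<le> m}}"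
    using assms change_point_event_in_sets[of "{m. m < t}"] change_point_event_in_sets[of "{m. t \<le> m}"]
    by (auto intro!: finite_measure_mono)
  moreover have "prob {\<omega> \<in> space M. tau0 \<omega> = m} > 0" for m using geom[of m] \<theta> by simp
  ultimately show "prob {\<omega> \<in> space M. tau0 \<omega> \<in> {m. m < t}} > 0"
    "prob {\<omega> \<in> space M. tau0 \<omega> \<in> {m. t \<le> m}} > 0"
    by (metis less_le_trans)+
qed

lemma freq_test_L2_error_le:
  assumes "1 \<le> t" and B: "B \<in> sets N" and ab: "\<bar>a - b\<bar> = 2 * \<delta>"
  shows "(\<integral>\<omega>. (indicator {\<omega> \<in> space M. tau0 \<omega> < t} \<omega> - freq_test X B b \<delta> K t \<omega>)\<^sup>2 \<partial>M)
    \<le> measure M ({\<omega> \<in> space M. tau0 \<omega> \<in> {m. m < t}} \<inter>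
          {\<omega> \<in> space M. real K * \<delta> \<le> \<bar>(\<Sum>k\<in>{1..K}. indicator B (X k t \<omega>)) - real K * b\<bar>})
      + measure M ({\<omega> \<in> space M. tau0 \<omega> \<in> {m. t \<le> m}} \<inter>
          {\<omega> \<in> space M. real K * \<delta> \<le> \<bar>(\<Sum>k\<in>{1..K}. indicator B (X k t \<omega>)) - real K * a\<bar>})"
    (is "_ \<le> measure M ?D1 + measure M ?D2")
proof -
  interpret prob_space M by (rule P)
  define E where "E = {\<omega> \<in> space M. tau0 \<omega> < t}"
  define Z where "Z = freq_test X B b \<delta> K t"
  define S where "S \<omega> = (\<Sum>k\<in>{1..K}. indicator B (X k t \<omega>) :: real)" for \<omega>
  have E_in: "E \<in> sets M" unfolding E_def using tau0_measurable by measurable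
  have [measurable]: "Z \<in> borel_measurable M"
    using borel_measurable_freq_test[where X=X, OF X_measurable \<open>1 \<le> t\<close> B]
      subalgebra_obs_full[where X=X, OF X_measurable] measurable_from_subalg unfolding Z_def by blast
  have [measurable]: "S \<in> borel_measurable M"
    unfolding S_def[abs_def] by (rule borel_measurable_sum) (use B X_measurable in measurable)
  have D_in: "?D1 \<in> sets M" "?D2 \<in> sets M"
    unfolding S_def[symmetric] using tau0_measurable by measurable measurable
  have Z_01: "Z \<omega> = 0 \<or> Z \<omega> = 1" for \<omega> unfolding Z_def freq_test_def by simp
  have error_integrable: "integrable M (\<lambda>\<omega>. (indicator E \<omega> - Z \<omega>)\<^sup>2)"
  proof (rule integrable_const_bound[of _ 1])
    show "AE \<omega> in M. norm ((indicator E \<omega> - Z \<omega>)\<^sup>2) \<le> 1"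
    proof (intro AE_I2)
      fix \<omega> show "norm ((indicator E \<omega> - Z \<omega>)\<^sup>2) \<le> (1::real)"
        using Z_01[of \<omega>] by (auto simp: indicator_def)
    qed
  qed (use E_in in measurable)
  have pointwise: "(indicator E \<omega> - Z \<omega>)\<^sup>2 \<le> indicator ?D1 \<omega> + indicator ?D2 \<omega>"
    if \<omega>: "\<omega> \<in> space M" for \<omega>
  proof (cases "\<omega> \<in> E")
    case True
    then show ?thesis using \<omega> by (auto simp: E_def Z_def freq_test_def indicator_def)
  next
    case False
    have "\<bar>real K * a - real K * b\<bar> = real K * (2 * \<delta>)"
      using ab by (simp add: abs_mult flip: right_diff_distrib)
    then have "\<bar>S \<omega> - real K * b\<bar> < real K * \<delta> \<Longrightarrow> \<bar>S \<omega> - real K * a\<bar> \<ge> real K * \<delta>"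
      by linarith
    then show ?thesis using False \<omega>
      by (auto simp: E_def Z_def freq_test_def S_def indicator_def not_less)
  qed
  have indicator_integrable: "integrable M (indicator A :: 'a \<Rightarrow> real)" if "A \<in> sets M" for A
    using that by (intro integrable_const_bound[of _ 1]) auto
  have "(\<integral>\<omega>. (indicator E \<omega> - Z \<omega>)\<^sup>2 \<partial>M) \<le> (\<integral>\<omega>. indicator ?D1 \<omega> + indicator ?D2 \<omega> \<partial>M)"
    by (rule integral_mono[OF error_integrable]) (use D_in pointwise indicator_integrable in auto)
  also have "\<dots> = measure M ?D1 + measure M ?D2"
    using D_in indicator_integrable by (simp add: Bochner_Integration.integral_add)
  finally show ?thesis unfolding E_def Z_def .
qed

lemma freq_test_L2_error:
  assumes "1 \<le> t" and B: "B \<in> sets N"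
  defines "a \<equiv> measure (density N (\<lambda>z. ennreal (p z))) B"
    and "b \<equiv> measure (density N (\<lambda>z. ennreal (q z))) B"
  defines "\<delta> \<equiv> \<bar>a - b\<bar> / 2"
  shows "(\<integral>\<omega>. (indicator {\<omega> \<in> space M. tau0 \<omega> < t} \<omega> - freq_test X B b \<delta> K t \<omega>)\<^sup>2 \<partial>M)
         \<le> 4 * exp (- 2 * \<delta>\<^sup>2) ^ K"
proof -
  interpret prob_space M by (rule P)
  have "\<bar>a - b\<bar> = 2 * \<delta>" unfolding \<delta>_def by simp
  note error_le = freq_test_L2_error_le[OF \<open>1 \<le> t\<close> B this, of K]
  show ?thesis
  proof (cases "K = 0")
    case True
    then show ?thesis using order_trans[OF error_le add_mono[OF prob_le_1 prob_le_1]] by simp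
  next
    case False
    then have K: "1 \<le> K" by simp
    have "\<delta> \<ge> 0" unfolding \<delta>_def by simp
    with hoeffding_given_change_class[OF \<open>1 \<le> t\<close> _ measure_change_classes_pos(1)[OF \<open>1 \<le> t\<close>] B K,
          where before=False and \<epsilon>="real K * \<delta>"]
      hoeffding_given_change_class[OF \<open>1 \<le> t\<close> _ measure_change_classes_pos(2)[OF \<open>1 \<le> t\<close>] B K,
          where before=True and \<epsilon>="real K * \<delta>"]
    have "prob ({\<omega> \<in> space M. tau0 \<omega> \<in> {m. m < t}} \<inter>
          {\<omega> \<in> space M. real K * \<delta> \<le> \<bar>(\<Sum>k\<in>{1..K}. indicator B (X k t \<omega>)) - real K * b\<bar>})
        + prob ({\<omega> \<in> space M. tau0 \<omega> \<in> {m. t \<le> m}} \<inter>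
          {\<omega> \<in> space M. real K * \<delta> \<le> \<bar>(\<Sum>k\<in>{1..K}. indicator B (X k t \<omega>)) - real K * a\<bar>})
        \<le> 4 * exp (- 2 * (real K * \<delta>)\<^sup>2 / real K)"
      by (simp add: a_def b_def)
    also have "- 2 * (real K * \<delta>)\<^sup>2 / real K = real K * (- 2 * \<delta>\<^sup>2)"
      using K by (simp add: power2_eq_square field_simps)
    finally show ?thesis
      using error_le by (simp add: exp_of_nat_mult[symmetric])
  qed
qed

lemma post_W_consistent:
  assumes "1 \<le> t" and B: "B \<in> sets N"
    and separating: "measure (density N (\<lambda>z. ennreal (p z))) B \<noteq> measure (density N (\<lambda>z. ennreal (q z))) B"
  shows "AE \<omega> in M. (\<lambda>K. post_W M N X tau0 K t \<omega>) \<longlonglongrightarrow> indicator {\<omega> \<in> space M. tau0 \<omega> < t} \<omega>"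
proof -
  interpret prob_space M by (rule P)
  define E where "E = {\<omega> \<in> space M. tau0 \<omega> < t}"
  define \<delta> where "\<delta> = \<bar>measure (density N (\<lambda>z. ennreal (p z))) B - measure (density N (\<lambda>z. ennreal (q z))) B\<bar> / 2"
  have \<delta>: "0 < \<delta>" using separating unfolding \<delta>_def by simp
  have E_in: "E \<in> sets M" unfolding E_def using tau0_measurable by measurable
  note subalgebra = subalgebra_obs_full[where X=X, OF X_measurable]
  show ?thesis
    unfolding E_def[symmetric]
  proof (rule AE_LIMSEQ_of_summable_L2_error)
    show "integrable M (\<lambda>x. (indicator E x - post_W M N X tau0 K t x)\<^sup>2)" for K
      unfolding post_W_def E_def using integrable_indicator_minus_real_cond_exp_sq[OF P subalgebra E_in]
      by (simp add: E_def)
    show "(\<integral>x. (indicator E x - post_W M N X tau0 K t x)\<^sup>2 \<partial>M) \<le> 4 * exp (- 2 * \<delta>\<^sup>2) ^ K" for K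
    proof -
      have "(\<integral>x. (indicator E x - post_W M N X tau0 K t x)\<^sup>2 \<partial>M)
          \<le> (\<integral>x. (indicator E x - freq_test X B (measure (density N (\<lambda>z. ennreal (q z))) B) \<delta> K t x)\<^sup>2 \<partial>M)"
        unfolding post_W_def E_def[symmetric]
        by (rule real_cond_exp_indicator_L2_le[OF P subalgebra E_in
            borel_measurable_freq_test[where X=X, OF X_measurable \<open>1 \<le> t\<close> B]]) (auto simp: freq_test_def)
      also have "\<dots> \<le> 4 * exp (- 2 * \<delta>\<^sup>2) ^ K"
        unfolding E_def \<delta>_def by (rule freq_test_L2_error[OF \<open>1 \<le> t\<close> B])
      finally show ?thesis .
    qed
    show "summable (\<lambda>K. 4 * exp (- 2 * \<delta>\<^sup>2) ^ K)"
      by (intro summable_mult summable_geometric) (use \<delta> in simp)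
  qed (use E_in in \<open>auto simp: post_W_def\<close>)
qed

lemma post_W_consistent_all:
  assumes "B \<in> sets N" "measure (density N (\<lambda>z. ennreal (p z))) B \<noteq> measure (density N (\<lambda>z. ennreal (q z))) B"
  shows "AE \<omega> in M. \<forall>t\<ge>1. (\<lambda>K. post_W M N X tau0 K t \<omega>) \<longlonglongrightarrow> (if tau0 \<omega> < t then 1 else 0)"
proof -
  have "AE \<omega> in M. \<forall>t. 1 \<le> t \<longrightarrow>
      (\<lambda>K. post_W M N X tau0 K t \<omega>) \<longlonglongrightarrow> indicator {\<omega> \<in> space M. tau0 \<omega> < t} \<omega>"
    unfolding AE_all_countable using post_W_consistent[OF _ assms] by (simp add: AE_I2)
  then show ?thesis
    using AE_space
  proof eventually_elim
    case (elim \<omega>)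
    show ?case
    proof (intro allI impI)
      fix t :: nat assume "1 \<le> t"
      then have "(\<lambda>K. post_W M N X tau0 K t \<omega>) \<longlonglongrightarrow> indicator {\<omega> \<in> space M. tau0 \<omega> < t} \<omega>"
        using elim(1) by blast
      moreover have "indicator {\<omega> \<in> space M. tau0 \<omega> < t} \<omega> = (if tau0 \<omega> < t then 1 else 0 :: real)"
        using elim(2) by simp
      ultimately show "(\<lambda>K. post_W M N X tau0 K t \<omega>) \<longlonglongrightarrow> (if tau0 \<omega> < t then 1 else 0)" by simp
    qed
  qed
qed

end

section \<open>Limits along the number of streams\<close>

context
  fixes w :: "nat \<Rightarrow> nat \<Rightarrow> real" and m :: nat and \<alpha> :: real
  assumes \<alpha>: "0 < \<alpha>" "\<alpha> < 1"
    and lim: "\<And>s. 1 \<le> s \<Longrightarrow> (\<lambda>K. w K s) \<longlonglongrightarrow> (if m < s then 1 else 0)"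
begin

lemma eventually_below_until_change:
  assumes "t \<le> m"
  shows "eventually (\<lambda>K. \<forall>s\<in>{1..t}. w K s \<le> \<alpha>) sequentially"
proof -
  have "eventually (\<lambda>K. w K s < \<alpha>) sequentially" if "s \<in> {1..t}" for s
    using lim[of s] that assms \<alpha> by (intro order_tendstoD(2)) auto
  then have "eventually (\<lambda>K. \<forall>s\<in>{1..t}. w K s < \<alpha>) sequentially"
    by (intro eventually_ball_finite) auto
  then show ?thesis by eventually_elim auto
qed

lemma eventually_exceeds_after_change: "eventually (\<lambda>K. w K (Suc m) > \<alpha>) sequentially"
  using lim[of "Suc m"] \<alpha> by (intro order_tendstoD(1)) auto

lemma eventually_not_below_after_change:
  assumes "m < t"
  shows "eventually (\<lambda>K. \<not> (\<forall>s\<in>{1..t}. w K s \<le> \<alpha>)) sequentially"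
  using eventually_exceeds_after_change
proof eventually_elim
  case (elim K)
  have "Suc m \<in> {1..t}" using assms by simp
  then show ?case using elim by force
qed

lemma eventually_first_exceedance:
  "eventually (\<lambda>K. (\<exists>t\<ge>1. w K t > \<alpha>) \<and> (LEAST t. 1 \<le> t \<and> w K t > \<alpha>) = Suc m) sequentially"
  using eventually_below_until_change[OF order.refl] eventually_exceeds_after_change
proof eventually_elim
  case (elim K)
  have "(LEAST t. 1 \<le> t \<and> w K t > \<alpha>) = Suc m"
  proof (rule Least_equality)
    show "1 \<le> Suc m \<and> w K (Suc m) > \<alpha>" using elim by simp
    show "Suc m \<le> t" if "1 \<le> t \<and> w K t > \<alpha>" for t
      using elim that by (meson atLeastAtMost_iff not_less not_less_eq_eq)
  qed
  then show ?case using elim by auto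
qed

lemma first_exceedance_minus_change_tendsto:
  "(\<lambda>K. ereal_of_enat (if \<exists>t\<ge>1. w K t > \<alpha> then enat (LEAST t. 1 \<le> t \<and> w K t > \<alpha>) else \<infinity>)
        - ereal (real m)) \<longlonglongrightarrow> 1"
proof (rule tendsto_eventually)
  show "eventually (\<lambda>K. ereal_of_enat (if \<exists>t\<ge>1. w K t > \<alpha>
      then enat (LEAST t. 1 \<le> t \<and> w K t > \<alpha>) else \<infinity>) - ereal (real m) = 1) sequentially"
    using eventually_first_exceedance by eventually_elim simp
qed

lemma active_fraction_tendsto:
  "(\<lambda>K. real (card (if \<forall>s\<in>{1..t}. w K s \<le> \<alpha> then {1..K} else {})) / real K)
     \<longlonglongrightarrow> (if t \<le> m then 1 else 0)"
proof (cases "t \<le> m")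
  case True
  have "eventually (\<lambda>K. real (card (if \<forall>s\<in>{1..t}. w K s \<le> \<alpha> then {1..K} else {})) / real K = 1)
      sequentially"
    using eventually_below_until_change[OF True] eventually_ge_at_top[of "1::nat"]
    by eventually_elim simp
  then show ?thesis using True by (simp add: tendsto_eventually)
next
  case False
  have "eventually (\<lambda>K. real (card (if \<forall>s\<in>{1..t}. w K s \<le> \<alpha> then {1..K} else {})) / real K = 0)
      sequentially"
    using eventually_not_below_after_change[of t] False unfolding not_le
    by (auto elim: eventually_mono)
  then show ?thesis using False by (simp add: tendsto_eventually)
qed

lemma active_posterior_tendsto:
  assumes "1 \<le> t"
  shows "(\<lambda>K. if (if \<forall>s\<in>{1..t}. w K s \<le> \<alpha> then {1..K} else {}) \<noteq> {} then w K t else 0) \<longlonglongrightarrow> 0"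
proof (cases "t \<le> m")
  case True
  then have "(\<lambda>K. w K t) \<longlonglongrightarrow> 0" using lim[OF assms] by simp
  then have "(\<lambda>K. \<bar>w K t\<bar>) \<longlonglongrightarrow> 0" by (rule tendsto_rabs_zero)
  then show ?thesis
    by (rule Lim_null_comparison[rotated]) (simp add: always_eventually)
next
  case False
  have "eventually (\<lambda>K. (if (if \<forall>s\<in>{1..t}. w K s \<le> \<alpha> then {1..K} else {}) \<noteq> {}
      then w K t else 0) = 0) sequentially"
    using eventually_not_below_after_change[of t] False unfolding not_le
    by (auto elim: eventually_mono)
  then show ?thesis by (rule tendsto_eventually)
qed

end

theorem theorem3:
  fixes M :: "'a measure" and N :: "'b measure"
    and X :: "nat \<Rightarrow> nat \<Rightarrow> 'a \<Rightarrow> 'b" and tau0 :: "'a \<Rightarrow> nat"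
    and p q :: "'b \<Rightarrow> real" and \<theta> \<alpha> :: real
  assumes "prob_space M"
    and "0 < \<alpha>" "\<alpha> < 1" and "0 < \<theta>" "\<theta> < 1"
    and "tau0 \<in> measurable M (count_space UNIV)"
    and "\<And>k t. X k t \<in> measurable M N"
    and "p \<in> borel_measurable N" "q \<in> borel_measurable N"
    and "\<And>z. z \<in> space N \<Longrightarrow> 0 \<le> p z" "\<And>z. z \<in> space N \<Longrightarrow> 0 \<le> q z"
    and "(\<integral>\<^sup>+ z. ennreal (p z) \<partial>N) = 1" "(\<integral>\<^sup>+ z. ennreal (q z) \<partial>N) = 1"
    and geom: "\<And>m. measure M {\<omega> \<in> space M. tau0 \<omega> = m} = \<theta> * (1 - \<theta>) ^ m"
    and cond: "\<And>m J B. finite J \<Longrightarrow> J \<subseteq> {1..} \<times> {1..} \<Longrightarrow> (\<forall>j\<in>J. B j \<in> sets N) \<Longrightarrow>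
        measure M {\<omega> \<in> space M. tau0 \<omega> = m \<and> (\<forall>(k, t) \<in> J. X k t \<omega> \<in> B (k, t))}
        = measure M {\<omega> \<in> space M. tau0 \<omega> = m} *
          (\<Prod>(k, t) \<in> J. measure (density N (\<lambda>z. ennreal (if t \<le> m then p z else q z))) (B (k, t)))"
    and A2: "AE z in density N (\<lambda>z. ennreal (p z)). 0 < q z"
            "AE z in density N (\<lambda>z. ennreal (q z)). 0 < p z"
            "integral\<^sup>L (density N (\<lambda>z. ennreal (p z))) (\<lambda>z. ln (p z / q z)) > 0"
            "integral\<^sup>L (density N (\<lambda>z. ennreal (q z))) (\<lambda>z. ln (q z / p z)) > 0"
            "integrable (density N (\<lambda>z. ennreal (p z))) (\<lambda>z. (ln (p z / q z))\<^sup>2)"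
            "integrable (density N (\<lambda>z. ennreal (q z))) (\<lambda>z. (ln (q z / p z))\<^sup>2)"
  shows "(\<forall>K. AE \<omega> in M. \<forall>k \<in> {1..K}.
             proc_T M N X (\<lambda>_. tau0) \<alpha> K k \<omega> = stop_T M N X tau0 \<alpha> K \<omega>)
       \<and> (AE \<omega> in M. ((\<lambda>K. ereal_of_enat (stop_T M N X tau0 \<alpha> K \<omega>) - ereal (real (tau0 \<omega>)))
             \<longlonglongrightarrow> 1))
       \<and> (\<forall>t \<ge> 1. AE \<omega> in M. ((\<lambda>K. proc_LFNR_next M N X (\<lambda>_. tau0) \<alpha> K t \<omega>) \<longlonglongrightarrow> 0))
       \<and> (\<forall>t \<ge> 1. AE \<omega> in M.
             ((\<lambda>K. real (card (proc_S M N X (\<lambda>_. tau0) \<alpha> K (t + 1) \<omega>)) / real K)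
               \<longlonglongrightarrow> (if t \<le> tau0 \<omega> then 1 else 0)))"
proof -
  note P = assms(1) and \<alpha> = assms(2,3) and tau0 = assms(6) and X = assms(7)
  have \<alpha>_nonneg: "0 \<le> \<alpha>" using \<alpha> by simp
  obtain B where B: "B \<in> sets N" and separating:
    "measure (density N (\<lambda>z. ennreal (p z))) B \<noteq> measure (density N (\<lambda>z. ennreal (q z))) B"
    using density_separating_set[OF assms(8,9,12,13) A2(2-4)] by blast
  have consistent: "AE \<omega> in M. \<forall>s\<ge>1.
      (\<lambda>K. post_W M N X tau0 K s \<omega>) \<longlonglongrightarrow> (if tau0 \<omega> < s then 1 else 0)"
    by (rule post_W_consistent_all[where X=X, OF P assms(4,5) tau0 X geom cond B separating])
  have active: "AE \<omega> in M. \<forall>K n. proc_S M N X (\<lambda>_. tau0) \<alpha> K (Suc n) \<omega>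
      = (if \<forall>s\<in>{1..n}. post_W M N X tau0 K s \<omega> \<le> \<alpha> then {1..K} else {})"
    by (subst AE_all_countable) (blast intro: proc_S_eq_post_W[where X=X, OF X \<alpha>_nonneg P tau0])
  have LFNR: "AE \<omega> in M. \<forall>K. proc_LFNR_next M N X (\<lambda>_. tau0) \<alpha> K t \<omega>
      = (if proc_S M N X (\<lambda>_. tau0) \<alpha> K (Suc t) \<omega> \<noteq> {} then post_W M N X tau0 K t \<omega> else 0)"
    if "1 \<le> t" for t
    by (subst AE_all_countable) (blast intro: proc_LFNR_next_eq[where X=X, OF X \<alpha>_nonneg P tau0 that])
  show ?thesis
  proof (intro conjI allI impI)
    show "AE \<omega> in M. \<forall>k \<in> {1..K}. proc_T M N X (\<lambda>_. tau0) \<alpha> K k \<omega> = stop_T M N X tau0 \<alpha> K \<omega>" for K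
      by (rule proc_T_eq_stop_T[where X=X, OF X \<alpha>_nonneg P tau0])
    show "AE \<omega> in M. (\<lambda>K. ereal_of_enat (stop_T M N X tau0 \<alpha> K \<omega>) - ereal (real (tau0 \<omega>))) \<longlonglongrightarrow> 1"
      using consistent unfolding stop_T_def
      by eventually_elim (rule first_exceedance_minus_change_tendsto[OF \<alpha>], simp)
    show "AE \<omega> in M. (\<lambda>K. proc_LFNR_next M N X (\<lambda>_. tau0) \<alpha> K t \<omega>) \<longlonglongrightarrow> 0" if "1 \<le> t" for t
      using LFNR[OF that] active consistent
    proof eventually_elim
      case (elim \<omega>)
      show ?case unfolding elim(1)[rule_format] elim(2)[rule_format]
        by (rule active_posterior_tendsto[where m="tau0 \<omega>", OF \<alpha> _ that]) (use elim(3) in auto)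
    qed
    show "AE \<omega> in M. (\<lambda>K. real (card (proc_S M N X (\<lambda>_. tau0) \<alpha> K (t + 1) \<omega>)) / real K)
        \<longlonglongrightarrow> (if t \<le> tau0 \<omega> then 1 else 0)" for t
      using active consistent
    proof eventually_elim
      case (elim \<omega>)
      show ?case unfolding Suc_eq_plus1[symmetric] elim(1)[rule_format]
        by (rule active_fraction_tendsto[OF \<alpha>]) (use elim(2) in auto)
    qed
  qed
qed

end
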